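(* Let $G$ be the automorphism group of $(\mathbb{Q},<)$ and let $f \in G$. Then the following are equivalent: (i) there exist $g, g_1, g_2 \in G$ such that $g$ is a restriction of $f$, $g_1$ is a bump which is an orbital of $g$ (in the group-element sense defined in the context), $g = g_1 g_2$, and $g$ is conjugate in $G$ to $g_2$; (ii) $f$ has infinitely many non-trivial orbitals.
   Context: For $f \in G$, an orbital of $f$ is an equivalence class of $\mathbb{Q}$ under the relation $a \sim b$ iff there are integers $m,n$ with $f^m a \le b \le f^n a$; it is non-trivial if it has more than one point. The support of an element of $G$ is the set of points it moves. A bump is a non-identity element of $G$ with exactly one non-trivial orbital. An element $g$ is a restriction of $f$ if the support of $g$ is contained in that of $f$ and $g$ agrees with $f$ on the support of $g$. An element $g_1$ is an orbital of $g$ if $g_1$ is a bump whose support is contained in that of $g$ and $g_1$ agrees with $g$ on its support. Condition (i) is the meaning in $G$ of the first-order group-theoretic formula ${\bf inf}(x)$ used in the paper. *)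

theory Defs
  imports Complex_Main
begin

definition aut :: "(rat \<Rightarrow> rat) \<Rightarrow> bool" where
  "aut f \<longleftrightarrow> bij f \<and> strict_mono f"

definition ipow :: "(rat \<Rightarrow> rat) \<Rightarrow> int \<Rightarrow> (rat \<Rightarrow> rat)" where
  "ipow f m = (if 0 \<le> m then f ^^ nat m else (inv f) ^^ nat (- m))"

definition orb_rel :: "(rat \<Rightarrow> rat) \<Rightarrow> rat \<Rightarrow> rat \<Rightarrow> bool" where
  "orb_rel f a b \<longleftrightarrow> (\<exists>m n :: int. ipow f m a \<le> b \<and> b \<le> ipow f n a)"

definition orbital_of :: "(rat \<Rightarrow> rat) \<Rightarrow> rat \<Rightarrow> rat set" where
  "orbital_of f a = {b. orb_rel f a b}"

definition nontriv_orbitals :: "(rat \<Rightarrow> rat) \<Rightarrow> rat set set" where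
  "nontriv_orbitals f = {C. (\<exists>a. C = orbital_of f a) \<and> (\<exists>x\<in>C. \<exists>y\<in>C. x \<noteq> y)}"

definition supp :: "(rat \<Rightarrow> rat) \<Rightarrow> rat set" where
  "supp f = {x. f x \<noteq> x}"

definition bump :: "(rat \<Rightarrow> rat) \<Rightarrow> bool" where
  "bump g \<longleftrightarrow> aut g \<and> g \<noteq> id \<and> (\<exists>!C. C \<in> nontriv_orbitals g)"

definition restriction_of :: "(rat \<Rightarrow> rat) \<Rightarrow> (rat \<Rightarrow> rat) \<Rightarrow> bool" where
  "restriction_of g f \<longleftrightarrow> supp g \<subseteq> supp f \<and> (\<forall>x\<in>supp g. g x = f x)"

definition orbital_elt_of :: "(rat \<Rightarrow> rat) \<Rightarrow> (rat \<Rightarrow> rat) \<Rightarrow> bool" where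
  "orbital_elt_of g1 g \<longleftrightarrow> bump g1 \<and> supp g1 \<subseteq> supp g \<and> (\<forall>x\<in>supp g1. g1 x = g x)"

end

(* If f satisfies (i), the non-trivial orbitals of the restriction g are among those of f, and
   g2 = g1^-1 g is g with the orbital of g1 deleted.  Conjugation by h maps the orbitals of g
   bijectively onto those of g2, a proper subset; so they, and hence those of f, cannot be finitely
   many.

   Conversely, Ramsey's theorem turns infinitely many orbitals into an ascending or a descending
   sequence, and the reflection x -> -x reduces the second case to the first.  Passing to a
   subsequence, all orbitals have the same direction and the same kind of end points (rational or
   irrational).  Keep every second orbital C_0 < C_1 < ..., separated by points q_0 < q_1 < ...
   of the dropped ones, and let g, g1, g2 be f restricted to all C_k, to C_0, and to the C_k with
   k >= 1.  Orbitals of the same type are conjugate, and so are the gaps around them, by an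
   argument about countable dense orders; hence [q_k, q_(k+1)) can be mapped onto
   [q_(k+1), q_(k+2)) conjugating g to g2.  These maps, a shift of the region below q_0 and the
   identity above all q_k glue to an automorphism h with h g = g2 h. *)

theory Submission
  imports Defs "HOL-Library.Ramsey"
begin

section \<open>Automorphisms and their integer powers\<close>

lemma aut_less_iff: "aut f \<Longrightarrow> f x < f y \<longleftrightarrow> x < y"
  by (simp add: aut_def strict_mono_less)

lemma aut_le_iff: "aut f \<Longrightarrow> f x \<le> f y \<longleftrightarrow> x \<le> y"
  by (simp add: aut_def strict_mono_less_eq)

lemma aut_eq_iff: "aut f \<Longrightarrow> f x = f y \<longleftrightarrow> x = y"
  by (simp add: aut_def strict_mono_eq)

lemma aut_inv_apply: "aut f \<Longrightarrow> inv f (f x) = x"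
  by (simp add: aut_def bij_is_inj)

lemma aut_apply_inv: "aut f \<Longrightarrow> f (inv f x) = x"
  by (simp add: aut_def bij_is_surj surj_f_inv_f)

lemma aut_less_inv_iff: "aut f \<Longrightarrow> x < inv f y \<longleftrightarrow> f x < y"
  using aut_less_iff[of f x "inv f y"] by (simp add: aut_apply_inv)

lemma aut_inv_less_iff: "aut f \<Longrightarrow> inv f y < x \<longleftrightarrow> y < f x"
  using aut_less_iff[of f "inv f y" x] by (simp add: aut_apply_inv)

lemma aut_if_strict_mono_surj: "strict_mono f \<Longrightarrow> surj f \<Longrightarrow> aut f"
  by (simp add: aut_def bij_def strict_mono_imp_inj_on)

lemma aut_inv: "aut f \<Longrightarrow> aut (inv f)"
  by (metis aut_apply_inv aut_if_strict_mono_surj aut_inv_apply aut_less_inv_iff strict_monoI surjI)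

lemma aut_id: "aut id"
  by (simp add: aut_def strict_mono_def)

lemma aut_comp: "aut f \<Longrightarrow> aut g \<Longrightarrow> aut (f \<circ> g)"
  by (simp add: aut_def bij_comp strict_mono_def)

lemma ipow_0 [simp]: "ipow f 0 = id"
  by (simp add: ipow_def)

lemma ipow_succ:
  assumes "aut f"
  shows "ipow f (m + 1) x = f (ipow f m x)"
proof (cases "0 \<le> m")
  case True
  then have "nat (m + 1) = Suc (nat m)" by simp
  with True show ?thesis by (simp add: ipow_def)
next
  case False
  then have "nat (- m) = Suc (nat (- (m + 1)))" by simp
  with False show ?thesis by (simp add: ipow_def aut_apply_inv[OF assms])
qed

lemma ipow_pred: "aut f \<Longrightarrow> ipow f (m - 1) x = inv f (ipow f m x)"
  using ipow_succ[of f "m - 1" x] by (simp add: aut_inv_apply)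

lemma ipow_add:
  assumes "aut f"
  shows "ipow f (m + n) x = ipow f m (ipow f n x)"
proof (induction m rule: int_induct[where k = 0])
  case (step1 i)
  then show ?case using ipow_succ[OF assms, of "i + n"] ipow_succ[OF assms, of i]
    by (simp add: algebra_simps)
next
  case (step2 i)
  then show ?case using ipow_pred[OF assms, of "i + n"] ipow_pred[OF assms, of i]
    by (simp add: algebra_simps)
qed simp

lemma ipow_1: "aut f \<Longrightarrow> ipow f 1 x = f x"
  using ipow_succ[of f 0 x] by simp

lemma ipow_neg_cancel: "aut f \<Longrightarrow> ipow f (- m) (ipow f m x) = x"
  using ipow_add[of f "- m" m x] by simp

lemma ipow_cancel_neg: "aut f \<Longrightarrow> ipow f m (ipow f (- m) x) = x"
  using ipow_add[of f m "- m" x] by simp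

lemma ipow_strict_mono:
  assumes "aut f"
  shows "strict_mono (ipow f m)"
proof (induction m rule: int_induct[where k = 0])
  case (step1 i)
  then show ?case
    by (simp add: strict_mono_def ipow_succ[OF assms] aut_less_iff[OF assms])
next
  case (step2 i)
  then show ?case
    by (simp add: strict_mono_def ipow_pred[OF assms] aut_less_iff[OF aut_inv[OF assms]])
qed (simp add: strict_mono_def)

lemma ipow_less_iff: "aut f \<Longrightarrow> ipow f m x < ipow f m y \<longleftrightarrow> x < y"
  by (simp add: ipow_strict_mono strict_mono_less)

lemma ipow_le_iff: "aut f \<Longrightarrow> ipow f m x \<le> ipow f m y \<longleftrightarrow> x \<le> y"
  by (simp add: ipow_strict_mono strict_mono_less_eq)

lemma ipow_fixpoint:
  assumes "aut f" "f a = a"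
  shows "ipow f m a = a"
proof (induction m rule: int_induct[where k = 0])
  case (step2 i)
  then show ?case using assms aut_inv_apply[OF assms(1), of a] by (simp add: ipow_pred)
qed (simp_all add: ipow_succ assms)

lemma ipow_intertwine:
  assumes g: "aut g" and k: "aut k" and comm: "\<And>x. k (\<sigma> x) = \<sigma> (g x)"
  shows "ipow k m (\<sigma> x) = \<sigma> (ipow g m x)"
proof (induction m rule: int_induct[where k = 0])
  case (step1 i)
  then show ?case by (simp add: ipow_succ g k comm)
next
  case (step2 i)
  have "inv k (\<sigma> y) = \<sigma> (inv g y)" for y
    using comm[of "inv g y"] aut_apply_inv[OF g] aut_inv_apply[OF k] by metis
  with step2 show ?case by (simp add: ipow_pred g k)
qed simp

lemma ipow_inv:
  assumes "aut f"
  shows "ipow (inv f) m x = ipow f (- m) x"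
proof -
  have "inv (inv f) = f" using assms by (simp add: aut_def inv_inv_eq)
  then show ?thesis by (cases "m = 0") (auto simp: ipow_def)
qed

section \<open>Orbitals\<close>

lemma orb_rel_refl: "orb_rel f a a"
  unfolding orb_rel_def by (metis ipow_0 id_apply order_refl)

lemma orb_rel_sym:
  assumes f: "aut f" and "orb_rel f a b"
  shows "orb_rel f b a"
proof -
  obtain m n where "ipow f m a \<le> b" "b \<le> ipow f n a"
    using assms(2) orb_rel_def by blast
  then have "ipow f (- n) b \<le> a" "a \<le> ipow f (- m) b"
    by (metis f ipow_le_iff ipow_neg_cancel)+
  then show ?thesis unfolding orb_rel_def by blast
qed

lemma orb_rel_trans:
  assumes f: "aut f" and "orb_rel f a b" "orb_rel f b c"
  shows "orb_rel f a c"
proof -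
  obtain m n where mn: "ipow f m a \<le> b" "b \<le> ipow f n a"
    using assms(2) orb_rel_def by blast
  obtain p q where pq: "ipow f p b \<le> c" "c \<le> ipow f q b"
    using assms(3) orb_rel_def by blast
  have "ipow f (p + m) a \<le> c" "c \<le> ipow f (q + n) a"
    using mn pq by (metis f ipow_add ipow_le_iff order_trans)+
  then show ?thesis unfolding orb_rel_def by blast
qed

lemma orb_rel_ipow: "orb_rel f a (ipow f k a)"
  unfolding orb_rel_def by blast

lemma self_in_orbital: "a \<in> orbital_of f a"
  by (simp add: orbital_of_def orb_rel_refl)

lemma orbital_of_eq: "aut f \<Longrightarrow> b \<in> orbital_of f a \<Longrightarrow> orbital_of f b = orbital_of f a"
  unfolding orbital_of_def using orb_rel_sym orb_rel_trans by blast

lemma orbital_convex: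
  assumes "x \<in> orbital_of f a" "z \<in> orbital_of f a" "x \<le> y" "y \<le> z"
  shows "y \<in> orbital_of f a"
  using assms unfolding orbital_of_def orb_rel_def by (blast intro: order_trans)

lemma orbital_ipow_closed:
  "aut f \<Longrightarrow> x \<in> orbital_of f a \<Longrightarrow> ipow f k x \<in> orbital_of f a"
  unfolding orbital_of_def using orb_rel_ipow orb_rel_trans by blast

lemma orbital_apply_closed: "aut f \<Longrightarrow> x \<in> orbital_of f a \<Longrightarrow> f x \<in> orbital_of f a"
  using orbital_ipow_closed[of f x a 1] by (simp add: ipow_1)

lemma orbital_inv_closed: "aut f \<Longrightarrow> x \<in> orbital_of f a \<Longrightarrow> inv f x \<in> orbital_of f a"
  using orbital_ipow_closed[of f x a "- 1"] ipow_pred[of f 0 x] by simp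

lemma orbital_of_fixpoint: "aut f \<Longrightarrow> f a = a \<Longrightarrow> orbital_of f a = {a}"
  by (auto simp: orbital_of_def orb_rel_def ipow_fixpoint)

lemma nontriv_orbitals_eq: "aut f \<Longrightarrow> nontriv_orbitals f = orbital_of f ` supp f"
proof (intro set_eqI iffI)
  fix C assume f: "aut f" and "C \<in> nontriv_orbitals f"
  then obtain a where a: "C = orbital_of f a" and "\<exists>x\<in>C. \<exists>y\<in>C. x \<noteq> y"
    unfolding nontriv_orbitals_def by blast
  then have "f a \<noteq> a" using orbital_of_fixpoint[OF f] by force
  then show "C \<in> orbital_of f ` supp f" using a by (simp add: supp_def)
next
  fix C assume f: "aut f" and "C \<in> orbital_of f ` supp f"
  then obtain a where a: "C = orbital_of f a" "f a \<noteq> a" by (auto simp: supp_def)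
  moreover have "a \<in> C" "f a \<in> C"
    using a self_in_orbital orbital_apply_closed[OF f self_in_orbital] by simp_all
  ultimately show "C \<in> nontriv_orbitals f"
    unfolding nontriv_orbitals_def by blast
qed

lemma nontriv_orbital_eq:
  "aut f \<Longrightarrow> C \<in> nontriv_orbitals f \<Longrightarrow> x \<in> C \<Longrightarrow> C = orbital_of f x"
  by (auto simp: nontriv_orbitals_eq orbital_of_eq)

lemma nontriv_orbital_subset_supp:
  assumes f: "aut f" and C: "C \<in> nontriv_orbitals f"
  shows "C \<subseteq> supp f"
proof
  fix x assume x: "x \<in> C"
  obtain a where a: "a \<in> supp f" "C = orbital_of f a"
    using C by (auto simp: nontriv_orbitals_eq[OF f])
  show "x \<in> supp f"
  proof (rule ccontr)
    assume "x \<notin> supp f"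
    then have "C = {x}" using nontriv_orbital_eq[OF f C x] orbital_of_fixpoint[OF f] by (simp add: supp_def)
    with a \<open>x \<notin> supp f\<close> show False using self_in_orbital[of a f] by auto
  qed
qed

lemma nontriv_orbital_nonempty: "C \<in> nontriv_orbitals f \<Longrightarrow> \<exists>x. x \<in> C"
  unfolding nontriv_orbitals_def by blast

lemma nontriv_orbitals_disjoint:
  "aut f \<Longrightarrow> C \<in> nontriv_orbitals f \<Longrightarrow> D \<in> nontriv_orbitals f \<Longrightarrow> x \<in> C \<Longrightarrow> x \<in> D \<Longrightarrow> C = D"
  using nontriv_orbital_eq by metis

lemma nontriv_orbital_convex:
  "aut f \<Longrightarrow> C \<in> nontriv_orbitals f \<Longrightarrow> x \<in> C \<Longrightarrow> z \<in> C \<Longrightarrow> x \<le> y \<Longrightarrow> y \<le> z \<Longrightarrow> y \<in> C"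
  by (metis nontriv_orbital_eq orbital_convex)

lemma nontriv_orbital_ipow_closed:
  "aut f \<Longrightarrow> C \<in> nontriv_orbitals f \<Longrightarrow> x \<in> C \<Longrightarrow> ipow f k x \<in> C"
  by (metis nontriv_orbital_eq orbital_ipow_closed)

lemma nontriv_orbital_apply_closed:
  "aut f \<Longrightarrow> C \<in> nontriv_orbitals f \<Longrightarrow> x \<in> C \<Longrightarrow> f x \<in> C"
  by (metis nontriv_orbital_eq orbital_apply_closed)

lemma nontriv_orbital_inv_closed:
  "aut f \<Longrightarrow> C \<in> nontriv_orbitals f \<Longrightarrow> x \<in> C \<Longrightarrow> inv f x \<in> C"
  by (metis nontriv_orbital_eq orbital_inv_closed)

lemma nontriv_orbital_unbounded:
  assumes f: "aut f" and C: "C \<in> nontriv_orbitals f" and x: "x \<in> C"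
  shows "\<exists>y\<in>C. x < y" "\<exists>y\<in>C. y < x"
proof -
  have "f x \<noteq> x" using nontriv_orbital_subset_supp[OF f C] x by (auto simp: supp_def)
  then have "x < f x \<and> inv f x < x \<or> f x < x \<and> x < inv f x"
    by (metis f aut_inv_less_iff aut_less_inv_iff linorder_neqE)
  then show "\<exists>y\<in>C. x < y" "\<exists>y\<in>C. y < x"
    using nontriv_orbital_apply_closed[OF f C x] nontriv_orbital_inv_closed[OF f C x] by blast+
qed

lemma nontriv_orbitals_inv:
  assumes "aut f"
  shows "nontriv_orbitals (inv f) = nontriv_orbitals f"
proof -
  have "orb_rel (inv f) = orb_rel f"
    unfolding orb_rel_def ipow_inv[OF assms] by (intro ext) (metis minus_minus)
  then show ?thesis unfolding nontriv_orbitals_def orbital_of_def by simp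
qed

definition set_less :: "rat set \<Rightarrow> rat set \<Rightarrow> bool" where
  "set_less A B \<longleftrightarrow> (\<forall>x\<in>A. \<forall>y\<in>B. x < y)"

lemma nontriv_orbitals_less:
  assumes f: "aut f" and C: "C \<in> nontriv_orbitals f" and D: "D \<in> nontriv_orbitals f"
    and "C \<noteq> D" and x: "x \<in> C" and y: "y \<in> D" and "x < y"
  shows "set_less C D"
  unfolding set_less_def
proof (intro ballI)
  fix x' y' assume x': "x' \<in> C" and y': "y' \<in> D"
  show "x' < y'"
  proof (rule ccontr)
    assume "\<not> x' < y'"
    then have "y \<in> C \<or> x' \<in> D"
      using nontriv_orbital_convex[OF f C x x'] nontriv_orbital_convex[OF f D y' y] \<open>x < y\<close>
      by (cases "y \<le> x'") auto
    then show False
      using nontriv_orbitals_disjoint[OF f C D] x' y \<open>C \<noteq> D\<close> by blast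
  qed
qed

lemma nontriv_orbitals_linear:
  assumes f: "aut f" and C: "C \<in> nontriv_orbitals f" and D: "D \<in> nontriv_orbitals f" and "C \<noteq> D"
  shows "set_less C D \<or> set_less D C"
proof -
  obtain x y where x: "x \<in> C" and y: "y \<in> D"
    using nontriv_orbital_nonempty C D by metis
  then have "x \<noteq> y" using nontriv_orbitals_disjoint[OF f C D] \<open>C \<noteq> D\<close> by blast
  then consider "x < y" | "y < x" by linarith
  then show ?thesis
    using nontriv_orbitals_less[OF f C D \<open>C \<noteq> D\<close> x y] nontriv_orbitals_less[OF f D C _ y x]
      \<open>C \<noteq> D\<close> by (cases; metis)
qed

section \<open>Restrictions, conjugates, and the finite case\<close>

lemma supp_invariant:
  assumes g: "aut g" and x: "x \<in> supp g"
  shows "g x \<in> supp g" "inv g x \<in> supp g"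
  using x aut_eq_iff[OF g, of "g x" x] aut_apply_inv[OF g, of x]
  by (auto simp: supp_def)

lemma restriction_orbital_eq:
  assumes f: "aut f" and g: "aut g" and r: "restriction_of g f" and a: "a \<in> supp g"
  shows "orbital_of g a = orbital_of f a"
proof -
  have gf: "g x = f x" if "x \<in> supp g" for x
    using r that unfolding restriction_of_def by blast
  have inv_gf: "inv g x = inv f x" if "x \<in> supp g" for x
  proof -
    have "f (inv g x) = x"
      using gf[OF supp_invariant(2)[OF g that]] aut_apply_inv[OF g, of x] by simp
    then show ?thesis using aut_inv_apply[OF f, of "inv g x"] by simp
  qed
  have "ipow g m a = ipow f m a \<and> ipow g m a \<in> supp g" for m
  proof (induction m rule: int_induct[where k = 0])
    case (step1 i)
    then have "ipow g i a \<in> supp g" "ipow g i a = ipow f i a" by blast+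
    with step1 show ?case
      using supp_invariant(1)[OF g] gf by (simp add: ipow_succ f g)
  next
    case (step2 i)
    then have "ipow g i a \<in> supp g" "ipow g i a = ipow f i a" by blast+
    with step2 show ?case
      using supp_invariant(2)[OF g] inv_gf by (simp add: ipow_pred f g)
  qed (simp add: a)
  then show ?thesis unfolding orbital_of_def orb_rel_def by simp
qed

lemma restriction_nontriv_orbitals:
  assumes f: "aut f" and g: "aut g" and r: "restriction_of g f"
  shows "nontriv_orbitals g \<subseteq> nontriv_orbitals f"
proof -
  have "orbital_of g ` supp g = orbital_of f ` supp g"
    using restriction_orbital_eq[OF f g r] by (rule image_cong[OF refl])
  also have "\<dots> \<subseteq> orbital_of f ` supp f"
    using r unfolding restriction_of_def by blast
  finally show ?thesis by (simp add: nontriv_orbitals_eq f g)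
qed

definition restr :: "(rat \<Rightarrow> rat) \<Rightarrow> rat set \<Rightarrow> rat \<Rightarrow> rat" where
  "restr f U x = (if x \<in> U then f x else x)"

lemma restr_restriction: "restriction_of (restr f U) f"
  by (auto simp: restriction_of_def restr_def supp_def split: if_splits)

lemma union_orbitals_closed:
  assumes f: "aut f" and S: "S \<subseteq> nontriv_orbitals f" and x: "x \<in> \<Union>S"
  shows "orbital_of f x \<subseteq> \<Union>S" "f x \<in> \<Union>S" "inv f x \<in> \<Union>S"
proof -
  obtain C where "C \<in> S" "x \<in> C" using x by blast
  then have "C = orbital_of f x" "C \<in> nontriv_orbitals f" using nontriv_orbital_eq[OF f] S by auto
  then show "orbital_of f x \<subseteq> \<Union>S" "f x \<in> \<Union>S" "inv f x \<in> \<Union>S"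
    using \<open>C \<in> S\<close> \<open>x \<in> C\<close> nontriv_orbital_apply_closed[OF f] nontriv_orbital_inv_closed[OF f] by blast+
qed

lemma restr_aut:
  assumes f: "aut f" and S: "S \<subseteq> nontriv_orbitals f"
  shows "aut (restr f (\<Union>S))"
proof (rule aut_if_strict_mono_surj)
  note closed = union_orbitals_closed[OF f S]
  show "strict_mono (restr f (\<Union>S))"
  proof (rule strict_monoI)
    fix x y :: rat assume xy: "x < y"
    have "f x < y" if "x \<in> \<Union>S" "y \<notin> \<Union>S"
    proof (rule ccontr)
      assume "\<not> f x < y"
      then have "y \<in> orbital_of f x"
        using orbital_convex[OF self_in_orbital orbital_apply_closed[OF f self_in_orbital]] xy by simp
      with that closed(1) show False by blast
    qed
    moreover have "x < f y" if "x \<notin> \<Union>S" "y \<in> \<Union>S"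
    proof (rule ccontr)
      assume "\<not> x < f y"
      then have "x \<in> orbital_of f y"
        using orbital_convex[OF orbital_apply_closed[OF f self_in_orbital] self_in_orbital] xy by simp
      with that closed(1) show False by blast
    qed
    ultimately show "restr f (\<Union>S) x < restr f (\<Union>S) y"
      using xy by (simp add: restr_def aut_less_iff f)
  qed
  show "surj (restr f (\<Union>S))"
  proof (rule surjI)
    fix y
    show "restr f (\<Union>S) (if y \<in> \<Union>S then inv f y else y) = y"
      using closed(3)[of y] by (cases "y \<in> \<Union>S") (simp_all add: restr_def aut_apply_inv f)
  qed
qed

lemma restr_nontriv_orbitals:
  assumes f: "aut f" and S: "S \<subseteq> nontriv_orbitals f"
  shows "nontriv_orbitals (restr f (\<Union>S)) = S"
proof -
  note g = restr_aut[OF f S]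
  have "supp (restr f (\<Union>S)) = \<Union>S"
    using S nontriv_orbital_subset_supp[OF f] by (auto simp: supp_def restr_def)
  then have "nontriv_orbitals (restr f (\<Union>S)) = orbital_of f ` \<Union>S"
    using restriction_orbital_eq[OF f g restr_restriction] by (simp add: nontriv_orbitals_eq g)
  also have "\<dots> = S"
    using S nontriv_orbital_eq[OF f] nontriv_orbital_nonempty
    by (auto simp: image_iff) (metis subsetD)
  finally show ?thesis .
qed

lemma order_preserving_or_reversing_inj:
  fixes \<sigma> :: "rat \<Rightarrow> rat"
  assumes "(\<forall>u v. \<sigma> u \<le> \<sigma> v \<longleftrightarrow> u \<le> v) \<or> (\<forall>u v. \<sigma> u \<le> \<sigma> v \<longleftrightarrow> v \<le> u)"
  shows "inj \<sigma>"
proof (rule injI)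
  fix x y :: rat
  assume "\<sigma> x = \<sigma> y"
  then have "\<sigma> x \<le> \<sigma> y" "\<sigma> y \<le> \<sigma> x" by simp_all
  with assms show "x = y" by (metis order.antisym)
qed

text \<open>\<open>\<sigma>\<close> may reverse the order, so that the reflection \<open>x \<mapsto> -x\<close> is covered as well.\<close>
lemma orbital_intertwine:
  assumes g: "aut g" and k: "aut k" and comm: "\<And>x. k (\<sigma> x) = \<sigma> (g x)" and "surj \<sigma>"
    and \<sigma>: "(\<forall>u v. \<sigma> u \<le> \<sigma> v \<longleftrightarrow> u \<le> v) \<or> (\<forall>u v. \<sigma> u \<le> \<sigma> v \<longleftrightarrow> v \<le> u)"
  shows "orbital_of k (\<sigma> a) = \<sigma> ` orbital_of g a"
proof -
  have rel: "orb_rel k (\<sigma> a) (\<sigma> b) \<longleftrightarrow> orb_rel g a b" for b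
  proof (cases "\<forall>u v. \<sigma> u \<le> \<sigma> v \<longleftrightarrow> u \<le> v")
    case True
    then show ?thesis unfolding orb_rel_def ipow_intertwine[where \<sigma> = \<sigma>, OF g k comm] by simp
  next
    case False
    with \<sigma> have "\<forall>u v. \<sigma> u \<le> \<sigma> v \<longleftrightarrow> v \<le> u" by blast
    then show ?thesis unfolding orb_rel_def ipow_intertwine[where \<sigma> = \<sigma>, OF g k comm] by auto
  qed
  have "inj \<sigma>" using \<sigma> by (rule order_preserving_or_reversing_inj)
  show ?thesis
  proof (rule set_eqI)
    fix c
    obtain b where c: "c = \<sigma> b" using \<open>surj \<sigma>\<close> by (metis surjD)
    show "c \<in> orbital_of k (\<sigma> a) \<longleftrightarrow> c \<in> \<sigma> ` orbital_of g a"
      using rel[of b] \<open>inj \<sigma>\<close> by (auto simp: c orbital_of_def inj_eq)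
  qed
qed

lemma nontriv_orbitals_intertwine:
  assumes g: "aut g" and k: "aut k" and comm: "\<And>x. k (\<sigma> x) = \<sigma> (g x)" and "surj \<sigma>"
    and \<sigma>: "(\<forall>u v. \<sigma> u \<le> \<sigma> v \<longleftrightarrow> u \<le> v) \<or> (\<forall>u v. \<sigma> u \<le> \<sigma> v \<longleftrightarrow> v \<le> u)"
  shows "nontriv_orbitals k = image \<sigma> ` nontriv_orbitals g"
proof -
  have "inj \<sigma>" using \<sigma> by (rule order_preserving_or_reversing_inj)
  have "supp k = \<sigma> ` supp g"
  proof (rule set_eqI)
    fix c
    obtain b where c: "c = \<sigma> b" using \<open>surj \<sigma>\<close> by (metis surjD)
    show "c \<in> supp k \<longleftrightarrow> c \<in> \<sigma> ` supp g"
      using \<open>inj \<sigma>\<close> by (auto simp: c supp_def comm inj_eq)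
  qed
  then show ?thesis
    by (simp add: nontriv_orbitals_eq g k image_image orbital_intertwine[OF assms])
qed

lemma conj_nontriv_orbitals:
  assumes g: "aut g" and h: "aut h"
  shows "nontriv_orbitals (h \<circ> g \<circ> inv h) = image h ` nontriv_orbitals g"
proof (rule nontriv_orbitals_intertwine[OF g])
  show "aut (h \<circ> g \<circ> inv h)" by (intro aut_comp aut_inv g h)
  show "(h \<circ> g \<circ> inv h) (h x) = h (g x)" for x by (simp add: aut_inv_apply h)
  show "surj h" using h by (simp add: aut_def bij_is_surj)
  show "(\<forall>u v. h u \<le> h v \<longleftrightarrow> u \<le> v) \<or> (\<forall>u v. h u \<le> h v \<longleftrightarrow> v \<le> u)"
    by (simp add: aut_le_iff h)
qed

lemma orbital_cofactor:
  assumes g: "aut g" and g1: "aut g1" and "orbital_elt_of g1 g" and "g = g1 \<circ> g2"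
  shows "restriction_of g2 g" "supp g1 \<inter> supp g2 = {}"
proof -
  have agree: "g1 x = g x" if "x \<in> supp g1" for x
    using \<open>orbital_elt_of g1 g\<close> that unfolding orbital_elt_of_def by blast
  have g2: "g2 x = inv g1 (g x)" for x
    using \<open>g = g1 \<circ> g2\<close> by (simp add: aut_inv_apply g1)
  have on: "g2 x = x" if "x \<in> supp g1" for x
    using g2[of x] agree[OF that] aut_inv_apply[OF g1, of x] by simp
  have off: "g2 x = g x" if x: "x \<notin> supp g1" for x
  proof -
    have "g x \<notin> supp g1"
    proof
      assume "g x \<in> supp g1"
      then have z: "inv g1 (g x) \<in> supp g1" by (rule supp_invariant(2)[OF g1])
      then have "g (inv g1 (g x)) = g x" using agree[OF z] aut_apply_inv[OF g1] by simp
      then show False using z x aut_eq_iff[OF g] by simp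
    qed
    then show ?thesis using g2 aut_inv_apply[OF g1, of "g x"] by (simp add: supp_def)
  qed
  show "supp g1 \<inter> supp g2 = {}" using on by (auto simp: supp_def)
  have "g2 x = g x \<and> x \<in> supp g" if "x \<in> supp g2" for x
    using that on off by (cases "x \<in> supp g1") (auto simp: supp_def)
  then show "restriction_of g2 g" unfolding restriction_of_def by blast
qed

definition satisfies_inf :: "(rat \<Rightarrow> rat) \<Rightarrow> bool" where
  "satisfies_inf f \<longleftrightarrow> (\<exists>g g1 g2. aut g \<and> aut g1 \<and> aut g2 \<and>
     restriction_of g f \<and> orbital_elt_of g1 g \<and> g = g1 \<circ> g2 \<and>
     (\<exists>h. aut h \<and> g2 = h \<circ> g \<circ> inv h))"

lemma satisfies_inf_infinite:
  assumes f: "aut f" and "satisfies_inf f"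
  shows "infinite (nontriv_orbitals f)"
proof
  assume fin: "finite (nontriv_orbitals f)"
  obtain g g1 g2 h where g: "aut g" and g1: "aut g1" and g2: "aut g2"
    and r: "restriction_of g f" and o: "orbital_elt_of g1 g" and fac: "g = g1 \<circ> g2"
    and h: "aut h" and conj: "g2 = h \<circ> g \<circ> inv h"
    using \<open>satisfies_inf f\<close> unfolding satisfies_inf_def by blast
  have fin_g: "finite (nontriv_orbitals g)"
    using restriction_nontriv_orbitals[OF f g r] fin by (rule finite_subset)
  have "g1 \<noteq> id" using o unfolding orbital_elt_of_def bump_def by blast
  then obtain a where "g1 a \<noteq> a" by (metis eq_id_iff)
  then have a: "a \<in> supp g1" by (simp add: supp_def)
  have "a \<in> supp g" using o a unfolding orbital_elt_of_def by blast
  then have in_g: "orbital_of g a \<in> nontriv_orbitals g" by (simp add: nontriv_orbitals_eq g)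
  have "orbital_of g a \<notin> nontriv_orbitals g2"
  proof
    assume "orbital_of g a \<in> nontriv_orbitals g2"
    then have "a \<in> supp g2"
      using nontriv_orbital_subset_supp[OF g2] self_in_orbital by blast
    then show False using a orbital_cofactor(2)[OF g g1 o fac] by blast
  qed
  then have "nontriv_orbitals g2 \<subset> nontriv_orbitals g"
    using restriction_nontriv_orbitals[OF g g2 orbital_cofactor(1)[OF g g1 o fac]] in_g by blast
  then have "card (nontriv_orbitals g2) < card (nontriv_orbitals g)"
    by (rule psubset_card_mono[OF fin_g])
  moreover have "inj_on (image h) (nontriv_orbitals g)"
    using h by (intro inj_onI) (simp add: aut_def bij_is_inj inj_image_eq_iff)
  then have "card (nontriv_orbitals g2) = card (nontriv_orbitals g)"
    by (simp add: conj conj_nontriv_orbitals g h card_image)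
  ultimately show False by simp
qed

section \<open>Order isomorphisms between sets of rationals\<close>

definition order_iso_betw :: "(rat \<Rightarrow> rat) \<Rightarrow> rat set \<Rightarrow> rat set \<Rightarrow> bool" where
  "order_iso_betw \<phi> A B \<longleftrightarrow> strict_mono_on A \<phi> \<and> \<phi> ` A = B"

definition order_convex :: "rat set \<Rightarrow> bool" where
  "order_convex A \<longleftrightarrow> (\<forall>x\<in>A. \<forall>z\<in>A. \<forall>y. x \<le> y \<and> y \<le> z \<longrightarrow> y \<in> A)"

lemma order_iso_betwD:
  "order_iso_betw \<phi> A B \<Longrightarrow> x \<in> A \<Longrightarrow> y \<in> A \<Longrightarrow> x < y \<Longrightarrow> \<phi> x < \<phi> y"
  unfolding order_iso_betw_def using strict_mono_onD by blast

lemma order_iso_betw_mapsto: "order_iso_betw \<phi> A B \<Longrightarrow> x \<in> A \<Longrightarrow> \<phi> x \<in> B"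
  by (auto simp: order_iso_betw_def)

lemma order_iso_betw_onto: "order_iso_betw \<phi> A B \<Longrightarrow> y \<in> B \<Longrightarrow> \<exists>x\<in>A. \<phi> x = y"
  by (auto simp: order_iso_betw_def)

lemma order_iso_betw_comp:
  "order_iso_betw \<phi> A B \<Longrightarrow> order_iso_betw \<psi> B C \<Longrightarrow> order_iso_betw (\<psi> \<circ> \<phi>) A C"
  unfolding order_iso_betw_def strict_mono_on_def monotone_on_def by (auto simp: image_comp)

lemma order_iso_betw_subsingleton:
  assumes "A = {} \<longleftrightarrow> B = {}" "\<And>x y. x \<in> A \<Longrightarrow> y \<in> A \<Longrightarrow> x = y"
    "\<And>x y. x \<in> B \<Longrightarrow> y \<in> B \<Longrightarrow> x = y"
  shows "\<exists>\<phi>. order_iso_betw \<phi> A B"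
proof (cases "A = {}")
  case True
  with assms(1) show ?thesis by (simp add: order_iso_betw_def)
next
  case False
  with assms obtain a b where "A = {a}" "B = {b}" by blast
  then have "order_iso_betw (\<lambda>_. b) A B" by (simp add: order_iso_betw_def monotone_on_def)
  then show ?thesis by blast
qed

lemma order_iso_betw_union:
  assumes \<phi>1: "order_iso_betw \<phi>1 A1 B1" and \<phi>2: "order_iso_betw \<phi>2 A2 B2"
    and "set_less A1 A2" "set_less B1 B2"
  shows "order_iso_betw (\<lambda>x. if x \<in> A1 then \<phi>1 x else \<phi>2 x) (A1 \<union> A2) (B1 \<union> B2)"
proof -
  have disj: "x \<notin> A1" if "x \<in> A2" for x
    using that \<open>set_less A1 A2\<close> unfolding set_less_def by blast
  have "strict_mono_on (A1 \<union> A2) (\<lambda>x. if x \<in> A1 then \<phi>1 x else \<phi>2 x)"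
  proof (rule strict_mono_onI)
    fix x y assume xy: "x \<in> A1 \<union> A2" "y \<in> A1 \<union> A2" "x < y"
    then consider "x \<in> A1" "y \<in> A1" | "x \<in> A1" "y \<in> A2" "y \<notin> A1" | "x \<in> A2" "y \<in> A2"
      using \<open>set_less A1 A2\<close> unfolding set_less_def by fastforce
    then show "(if x \<in> A1 then \<phi>1 x else \<phi>2 x) < (if y \<in> A1 then \<phi>1 y else \<phi>2 y)"
    proof cases
      case 2
      then show ?thesis using order_iso_betw_mapsto[OF \<phi>1] order_iso_betw_mapsto[OF \<phi>2]
          \<open>set_less B1 B2\<close> unfolding set_less_def by simp
    qed (use xy disj order_iso_betwD[OF \<phi>1] order_iso_betwD[OF \<phi>2] in auto)
  qed
  moreover have "(\<lambda>x. if x \<in> A1 then \<phi>1 x else \<phi>2 x) ` (A1 \<union> A2) = B1 \<union> B2"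
    using \<phi>1 \<phi>2 disj unfolding order_iso_betw_def by (auto simp: image_Un image_iff)
  ultimately show ?thesis unfolding order_iso_betw_def by blast
qed

lemma order_iso_betw_affine:
  fixes a b a' b' :: rat
  assumes "a < b" "a' < b'"
  shows "order_iso_betw (\<lambda>x. a' + (x - a) * ((b' - a') / (b - a))) {a..<b} {a'..<b'}"
proof -
  define s where "s = (b' - a') / (b - a)"
  have s: "s > 0" using assms by (simp add: s_def)
  have "strict_mono_on {a..<b} (\<lambda>x. a' + (x - a) * s)"
    using s by (intro strict_mono_onI) (simp add: mult_strict_right_mono)
  moreover have "(\<lambda>x. a' + (x - a) * s) ` {a..<b} = {a'..<b'}"
  proof
    have "(x - a) * s < b' - a'" if "x < b" for x
    proof -
      have "(x - a) * s < (b - a) * s" using that s by (simp add: mult_strict_right_mono)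
      also have "(b - a) * s = b' - a'" using assms by (simp add: s_def)
      finally show ?thesis .
    qed
    then show "(\<lambda>x. a' + (x - a) * s) ` {a..<b} \<subseteq> {a'..<b'}"
      using s by (force simp: algebra_simps)
  next
    show "{a'..<b'} \<subseteq> (\<lambda>x. a' + (x - a) * s) ` {a..<b}"
    proof
      fix y assume y: "y \<in> {a'..<b'}"
      have "(y - a') / s < (b' - a') / s" using y s by (simp add: divide_strict_right_mono)
      also have "(b' - a') / s = b - a" using assms by (simp add: s_def)
      finally have "(y - a') / s < b - a" .
      moreover have "y = a' + (a + (y - a') / s - a) * s" using s by simp
      ultimately show "y \<in> (\<lambda>x. a' + (x - a) * s) ` {a..<b}"
        using y s by (intro image_eqI[of _ _ "a + (y - a') / s"]) auto
    qed
  qed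
  ultimately show ?thesis unfolding order_iso_betw_def s_def by simp
qed

lemma strict_mono_int_succI:
  fixes c :: "int \<Rightarrow> rat"
  assumes "\<And>n. c n < c (n + 1)"
  shows "strict_mono c"
proof (rule strict_monoI)
  fix m n :: int
  assume "m < n"
  then have "m + 1 \<le> n" by simp
  then show "c m < c n"
  proof (induction n rule: int_ge_induct)
    case (step i)
    then show ?case using assms[of i] by simp
  qed (use assms in simp)
qed

definition chain_union :: "(int \<Rightarrow> rat) \<Rightarrow> rat set" where
  "chain_union c = {x. \<exists>n. c n \<le> x \<and> x < c (n + 1)}"

definition chain_index :: "(int \<Rightarrow> rat) \<Rightarrow> rat \<Rightarrow> int" where
  "chain_index c x = (THE n. c n \<le> x \<and> x < c (n + 1))"

lemma chain_index_eq:
  fixes c :: "int \<Rightarrow> rat"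
  assumes c: "strict_mono c" and "c n \<le> x" "x < c (n + 1)"
  shows "chain_index c x = n"
  unfolding chain_index_def
proof (rule the_equality)
  fix m assume m: "c m \<le> x \<and> x < c (m + 1)"
  have "\<not> m + 1 \<le> n" "\<not> n + 1 \<le> m"
    using m assms by (auto dest: strict_mono_less_eq[OF c, THEN iffD2])
  then show "m = n" by simp
qed (use assms in simp)

lemma chain_index:
  assumes "strict_mono c" "x \<in> chain_union c"
  shows "c (chain_index c x) \<le> x" "x < c (chain_index c x + 1)"
  using assms chain_index_eq unfolding chain_union_def by force+

lemma chain_unionI:
  assumes c: "strict_mono c" and "c m \<le> x" "x < c M"
  shows "x \<in> chain_union c"
proof -
  define S where "S = {n. m \<le> n \<and> n < M \<and> c n \<le> x}"
  have "m < M" using assms strict_mono_less_eq[OF c, of M m] by linarith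
  then have "finite S" "m \<in> S"
    using assms by (auto intro: finite_subset[of _ "{m..<M}"] simp: S_def)
  then have n: "Max S \<in> S" "Max S + 1 \<notin> S"
    using Max_ge[of S "Max S + 1"] by (auto intro: Max_in)
  have "x < c (Max S + 1)"
    using n assms by (cases "Max S + 1 = M") (auto simp: S_def)
  then show ?thesis using n unfolding chain_union_def S_def by blast
qed

lemma chain_glue_image:
  assumes c: "strict_mono c"
    and \<Phi>: "\<And>n. order_iso_betw (\<Phi> n) {c n..<c (n + 1)} {d n..<d (n + 1)}"
  shows "(\<lambda>x. \<Phi> (chain_index c x) x) ` chain_union c = chain_union d"
proof
  show "(\<lambda>x. \<Phi> (chain_index c x) x) ` chain_union c \<subseteq> chain_union d"
  proof
    fix z assume "z \<in> (\<lambda>x. \<Phi> (chain_index c x) x) ` chain_union c"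
    then obtain x where x: "x \<in> chain_union c" "z = \<Phi> (chain_index c x) x" by blast
    then have "z \<in> {d (chain_index c x)..<d (chain_index c x + 1)}"
      using chain_index[OF c x(1)] order_iso_betw_mapsto[OF \<Phi>] by simp
    then show "z \<in> chain_union d" unfolding chain_union_def by auto
  qed
next
  show "chain_union d \<subseteq> (\<lambda>x. \<Phi> (chain_index c x) x) ` chain_union c"
  proof
    fix z assume "z \<in> chain_union d"
    then obtain n where "z \<in> {d n..<d (n + 1)}" unfolding chain_union_def by auto
    then obtain x where x: "x \<in> {c n..<c (n + 1)}" "\<Phi> n x = z"
      using order_iso_betw_onto[OF \<Phi>] by blast
    then have "chain_index c x = n" "x \<in> chain_union c"
      using chain_index_eq[OF c] unfolding chain_union_def by auto
    then show "z \<in> (\<lambda>x. \<Phi> (chain_index c x) x) ` chain_union c" using x by force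
  qed
qed

lemma chain_glue:
  assumes c: "strict_mono c" and d: "strict_mono d"
    and \<Phi>: "\<And>n. order_iso_betw (\<Phi> n) {c n..<c (n + 1)} {d n..<d (n + 1)}"
  shows "order_iso_betw (\<lambda>x. \<Phi> (chain_index c x) x) (chain_union c) (chain_union d)"
proof -
  have "strict_mono_on (chain_union c) (\<lambda>x. \<Phi> (chain_index c x) x)"
  proof (rule strict_mono_onI)
    fix x y assume xy: "x \<in> chain_union c" "y \<in> chain_union c" "x < y"
    define n where "n = chain_index c x"
    define m where "m = chain_index c y"
    have n: "c n \<le> x" "x < c (n + 1)" and m: "c m \<le> y" "y < c (m + 1)"
      using chain_index[OF c] xy unfolding n_def m_def by auto
    have "n \<le> m" using n m xy strict_mono_less_eq[OF c, of "m + 1" n] by linarith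
    show "\<Phi> (chain_index c x) x < \<Phi> (chain_index c y) y"
    proof (cases "n = m")
      case True
      then show ?thesis using order_iso_betwD[OF \<Phi>[of n]] n m xy unfolding n_def m_def by simp
    next
      case False
      then have "d (n + 1) \<le> d m" using \<open>n \<le> m\<close> strict_mono_less_eq[OF d] by simp
      moreover have "\<Phi> n x < d (n + 1)" "d m \<le> \<Phi> m y"
        using order_iso_betw_mapsto[OF \<Phi>[of n]] order_iso_betw_mapsto[OF \<Phi>[of m]] n m by auto
      ultimately show ?thesis unfolding n_def m_def by simp
    qed
  qed
  moreover have "(\<lambda>x. \<Phi> (chain_index c x) x) ` chain_union c = chain_union d"
    by (rule chain_glue_image[OF c \<Phi>])
  ultimately show ?thesis unfolding order_iso_betw_def by blast
qed

lemma cofinal_sequence: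
  fixes A :: "rat set"
  assumes "a \<in> A" and no_max: "\<And>x. x \<in> A \<Longrightarrow> \<exists>y\<in>A. x < y"
  shows "\<exists>u. u 0 = a \<and> (\<forall>n. u n \<in> A \<and> u n < u (Suc n)) \<and> (\<forall>x\<in>A. \<exists>n. x < u n)"
proof -
  have "\<exists>y. y \<in> A \<and> x < y \<and> (from_nat n \<in> A \<longrightarrow> from_nat n < y)" if "x \<in> A" for x n
  proof (cases "from_nat n \<in> A")
    case True
    then have "max x (from_nat n) \<in> A" using that by (simp add: max_def)
    then show ?thesis using no_max by fastforce
  qed (use no_max[OF that] in blast)
  then obtain next_pt where next_pt: "\<And>x n. x \<in> A \<Longrightarrow>
      next_pt x n \<in> A \<and> x < next_pt x n \<and> (from_nat n \<in> A \<longrightarrow> from_nat n < next_pt x n)"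
    by metis
  define u where "u = rec_nat a (\<lambda>n x. next_pt x n)"
  have u0: "u 0 = a" and uS: "u (Suc n) = next_pt (u n) n" for n by (simp_all add: u_def)
  have uA: "u n \<in> A" for n by (induction n) (simp_all add: u0 uS \<open>a \<in> A\<close> next_pt)
  have "x < u (Suc (to_nat x))" if "x \<in> A" for x
    using next_pt[OF uA[of "to_nat x"], of "to_nat x"] that by (simp add: uS from_nat_to_nat)
  moreover have "u n < u (Suc n)" for n using next_pt[OF uA[of n]] by (simp add: uS)
  ultimately show ?thesis using u0 uA by blast
qed

lemma strict_mono_two_sided:
  fixes u v :: "nat \<Rightarrow> rat"
  assumes "u 0 = v 0" "\<And>n. u n < u (Suc n)" "\<And>n. v (Suc n) < v n"
  shows "strict_mono (\<lambda>i :: int. if 0 \<le> i then u (nat i) else v (nat (- i)))"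
proof (rule strict_mono_int_succI)
  fix i :: int
  show "(if 0 \<le> i then u (nat i) else v (nat (- i))) <
    (if 0 \<le> i + 1 then u (nat (i + 1)) else v (nat (- (i + 1))))"
  proof (cases "0 \<le> i")
    case True
    then have "nat (i + 1) = Suc (nat i)" by simp
    with True show ?thesis using assms(2)[of "nat i"] by simp
  next
    case False
    then have "nat (- i) = Suc (nat (- (i + 1)))" by simp
    with False show ?thesis using assms(1) assms(3)[of "nat (- (i + 1))"] by (cases "i = - 1") auto
  qed
qed

lemma order_convex_chain:
  fixes A :: "rat set"
  assumes A: "order_convex A" "a \<in> A"
    and no_min: "\<And>x. x \<in> A \<Longrightarrow> \<exists>y\<in>A. y < x" and no_max: "\<And>x. x \<in> A \<Longrightarrow> \<exists>y\<in>A. x < y"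
  shows "\<exists>c. strict_mono c \<and> chain_union c = A"
proof -
  obtain u where u: "u 0 = a" "\<And>n. u n \<in> A \<and> u n < u (Suc n)" "\<And>x. x \<in> A \<Longrightarrow> \<exists>n. x < u n"
    using cofinal_sequence[OF A(2) no_max] by blast
  have "\<exists>y\<in>uminus ` A. x < y" if x: "x \<in> uminus ` A" for x
  proof -
    obtain a' where "a' \<in> A" "x = - a'" using x by blast
    then obtain y where "y \<in> A" "y < a'" using no_min by blast
    then show ?thesis using \<open>x = - a'\<close> by (intro bexI[of _ "- y"]) auto
  qed
  moreover have "- a \<in> uminus ` A" using A(2) by simp
  ultimately obtain d where d: "d 0 = - a" "\<And>n. d n \<in> uminus ` A \<and> d n < d (Suc n)"
      "\<And>x. x \<in> uminus ` A \<Longrightarrow> \<exists>n. x < d n"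
    using cofinal_sequence[of "- a" "uminus ` A"] by meson
  define c where "c i = (if 0 \<le> i then u (nat i) else - d (nat (- i)))" for i
  have c: "strict_mono c"
    unfolding c_def using u(1,2) d(1,2) by (intro strict_mono_two_sided) auto
  have "- d n \<in> A" for n using d(2)[of n] by auto
  then have cA: "c i \<in> A" for i using u(2) by (simp add: c_def)
  have "chain_union c = A"
  proof
    show "chain_union c \<subseteq> A"
    proof
      fix x assume "x \<in> chain_union c"
      then obtain n where "c n \<le> x" "x < c (n + 1)" unfolding chain_union_def by blast
      then show "x \<in> A" using cA[of n] cA[of "n + 1"] A(1) less_imp_le
        unfolding order_convex_def by blast
    qed
    show "A \<subseteq> chain_union c"
    proof
      fix x assume "x \<in> A"
      obtain n where n: "x < u n" using u(3) \<open>x \<in> A\<close> by blast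
      obtain m where m: "- x < d m" using d(3) \<open>x \<in> A\<close> by blast
      have "c (- int m) \<le> x"
        using m d(1) u(1) by (cases "m = 0") (simp_all add: c_def)
      moreover have "x < c (int n)" using n by (simp add: c_def)
      ultimately show "x \<in> chain_union c" by (rule chain_unionI[OF c])
    qed
  qed
  with c show ?thesis by blast
qed

lemma order_convex_iso_unbounded:
  assumes A: "order_convex A" "a \<in> A" "\<And>x. x \<in> A \<Longrightarrow> \<exists>y\<in>A. y < x" "\<And>x. x \<in> A \<Longrightarrow> \<exists>y\<in>A. x < y"
    and B: "order_convex B" "b \<in> B" "\<And>x. x \<in> B \<Longrightarrow> \<exists>y\<in>B. y < x" "\<And>x. x \<in> B \<Longrightarrow> \<exists>y\<in>B. x < y"
  shows "\<exists>\<phi>. order_iso_betw \<phi> A B"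
proof -
  obtain c where c: "strict_mono c" "chain_union c = A" using order_convex_chain[OF A] by blast
  obtain d where d: "strict_mono d" "chain_union d = B" using order_convex_chain[OF B] by blast
  have "order_iso_betw (\<lambda>x. d n + (x - c n) * ((d (n + 1) - d n) / (c (n + 1) - c n)))
      {c n..<c (n + 1)} {d n..<d (n + 1)}" for n
    by (rule order_iso_betw_affine) (simp_all add: c(1) d(1) strict_monoD)
  then have "order_iso_betw (\<lambda>x. d (chain_index c x) + (x - c (chain_index c x)) *
      ((d (chain_index c x + 1) - d (chain_index c x)) / (c (chain_index c x + 1) - c (chain_index c x))))
      (chain_union c) (chain_union d)"
    by (rule chain_glue[OF c(1) d(1)])
  then show ?thesis using c(2) d(2) by blast
qed

definition order_interior :: "rat set \<Rightarrow> rat set" where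
  "order_interior A = {x\<in>A. (\<exists>y\<in>A. y < x) \<and> (\<exists>z\<in>A. x < z)}"

lemma order_interior_convex:
  assumes "order_convex A"
  shows "order_convex (order_interior A)"
  unfolding order_convex_def
proof (intro ballI allI impI)
  fix x z y assume "x \<in> order_interior A" "z \<in> order_interior A" "x \<le> y \<and> y \<le> z"
  then obtain u v where "x \<in> A" "z \<in> A" "u \<in> A" "u < x" "v \<in> A" "z < v" "x \<le> y" "y \<le> z"
    unfolding order_interior_def by blast
  moreover from this have "y \<in> A" using assms unfolding order_convex_def by blast
  ultimately show "y \<in> order_interior A"
    unfolding order_interior_def by (blast intro: order_less_le_trans order_le_less_trans)
qed

lemma midpoint_in_order_interior:
  assumes A: "order_convex A" and "x \<in> A" "z \<in> A" "x < z"
  shows "(x + z) / 2 \<in> order_interior A"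
proof -
  have lt: "x < (x + z) / 2" "(x + z) / 2 < z" using \<open>x < z\<close> by (simp_all add: field_simps)
  then have "(x + z) / 2 \<in> A"
    using A[unfolded order_convex_def] \<open>x \<in> A\<close> \<open>z \<in> A\<close> less_imp_le by blast
  with lt \<open>x \<in> A\<close> \<open>z \<in> A\<close> show ?thesis unfolding order_interior_def by blast
qed

lemma order_interior_unbounded:
  assumes A: "order_convex A" and x: "x \<in> order_interior A"
  shows "\<exists>y\<in>order_interior A. y < x" "\<exists>y\<in>order_interior A. x < y"
proof -
  obtain y z where yz: "x \<in> A" "y \<in> A" "y < x" "z \<in> A" "x < z"
    using x unfolding order_interior_def by blast
  have "(y + x) / 2 < x" "x < (x + z) / 2" using yz by (simp_all add: field_simps)
  then show "\<exists>y\<in>order_interior A. y < x" "\<exists>y\<in>order_interior A. x < y"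
    using midpoint_in_order_interior[OF A] yz by blast+
qed

lemma order_convex_iso:
  assumes A: "order_convex A" "x1 \<in> A" "x2 \<in> A" "x1 < x2"
    and B: "order_convex B" "y1 \<in> B" "y2 \<in> B" "y1 < y2"
    and least: "(\<exists>m\<in>A. \<forall>x\<in>A. m \<le> x) \<longleftrightarrow> (\<exists>m\<in>B. \<forall>x\<in>B. m \<le> x)"
    and greatest: "(\<exists>m\<in>A. \<forall>x\<in>A. x \<le> m) \<longleftrightarrow> (\<exists>m\<in>B. \<forall>x\<in>B. x \<le> m)"
  shows "\<exists>\<phi>. order_iso_betw \<phi> A B"
proof -
  define lo where "lo X = {x\<in>X. \<forall>y\<in>X. x \<le> y}" for X :: "rat set"
  define hi where "hi X = {x\<in>X. \<forall>y\<in>X. y \<le> x}" for X :: "rat set"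
  have split: "X = (lo X \<union> order_interior X) \<union> hi X" for X
    unfolding lo_def hi_def order_interior_def by (auto simp: not_le)
  have less1: "set_less (lo X) (order_interior X)" for X
    unfolding set_less_def lo_def order_interior_def by force
  have less2: "set_less (lo X \<union> order_interior X) (hi X)" if w: "w \<in> order_interior X" for X w
    unfolding set_less_def
  proof (intro ballI)
    fix x y assume x: "x \<in> lo X \<union> order_interior X" and y: "y \<in> hi X"
    obtain v where "w \<in> X" "v \<in> X" "w < v" using w unfolding order_interior_def by blast
    then have "w < y" using y unfolding hi_def by fastforce
    show "x < y"
    proof (cases "x \<in> lo X")
      case True
      then show ?thesis using \<open>w \<in> X\<close> \<open>w < y\<close> unfolding lo_def by fastforce
    next
      case False
      then obtain z where "z \<in> X" "x < z" using x unfolding order_interior_def by blast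
      then show ?thesis using y unfolding hi_def by fastforce
    qed
  qed
  note midA = midpoint_in_order_interior[OF A] and midB = midpoint_in_order_interior[OF B]
  obtain \<phi> where \<phi>: "order_iso_betw \<phi> (order_interior A) (order_interior B)"
    using order_convex_iso_unbounded[OF order_interior_convex[OF A(1)] midA
        order_interior_unbounded[OF A(1)] order_interior_convex[OF B(1)] midB
        order_interior_unbounded[OF B(1)]] by blast
  have "\<exists>\<phi>lo. order_iso_betw \<phi>lo (lo A) (lo B)"
    using least by (intro order_iso_betw_subsingleton) (auto simp: lo_def intro: order.antisym)
  then obtain \<phi>lo where \<phi>lo: "order_iso_betw \<phi>lo (lo A) (lo B)" ..
  have "\<exists>\<phi>hi. order_iso_betw \<phi>hi (hi A) (hi B)"
    using greatest by (intro order_iso_betw_subsingleton) (auto simp: hi_def intro: order.antisym)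
  then obtain \<phi>hi where \<phi>hi: "order_iso_betw \<phi>hi (hi A) (hi B)" ..
  note glued = order_iso_betw_union[OF order_iso_betw_union[OF \<phi>lo \<phi> less1 less1] \<phi>hi
      less2[OF midA] less2[OF midB]]
  show ?thesis using glued unfolding split[of A, symmetric] split[of B, symmetric] by blast
qed

section \<open>Conjugacy of orbitals\<close>

lemma order_iso_betw_ipow:
  assumes f: "aut f"
  shows "order_iso_betw (ipow f k) {a..<b} {ipow f k a..<ipow f k b}"
  unfolding order_iso_betw_def
proof
  show "strict_mono_on {a..<b} (ipow f k)"
    by (intro strict_mono_onI) (simp add: ipow_less_iff f)
  show "ipow f k ` {a..<b} = {ipow f k a..<ipow f k b}"
  proof
    show "ipow f k ` {a..<b} \<subseteq> {ipow f k a..<ipow f k b}"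
      by (auto simp: ipow_less_iff ipow_le_iff f)
    show "{ipow f k a..<ipow f k b} \<subseteq> ipow f k ` {a..<b}"
    proof
      fix y assume y: "y \<in> {ipow f k a..<ipow f k b}"
      have y_eq: "y = ipow f k (ipow f (- k) y)" by (simp add: ipow_cancel_neg f)
      with y have "ipow f (- k) y \<in> {a..<b}"
        by (metis atLeastLessThan_iff ipow_le_iff ipow_less_iff f)
      with y_eq show "y \<in> ipow f k ` {a..<b}" by blast
    qed
  qed
qed

lemma orbit_chain:
  assumes f: "aut f" and C: "C \<in> nontriv_orbitals f" and x0: "x0 \<in> C" "x0 < f x0"
  shows "strict_mono (\<lambda>n. ipow f n x0)" "chain_union (\<lambda>n. ipow f n x0) = C"
proof -
  have "ipow f n x0 < ipow f (n + 1) x0" for n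
    using x0(2) ipow_less_iff[OF f, of n x0 "f x0"] ipow_add[OF f, of n 1 x0] by (simp add: ipow_1 f)
  then show c: "strict_mono (\<lambda>n. ipow f n x0)" by (rule strict_mono_int_succI)
  show "chain_union (\<lambda>n. ipow f n x0) = C"
  proof
    show "chain_union (\<lambda>n. ipow f n x0) \<subseteq> C"
      unfolding chain_union_def
      using nontriv_orbital_convex[OF f C] nontriv_orbital_ipow_closed[OF f C x0(1)]
      by (blast intro: less_imp_le)
    show "C \<subseteq> chain_union (\<lambda>n. ipow f n x0)"
    proof
      fix x assume "x \<in> C"
      then obtain m n where "ipow f m x0 \<le> x" "x \<le> ipow f n x0"
        using nontriv_orbital_eq[OF f C x0(1)] unfolding orbital_of_def orb_rel_def by blast
      moreover have "ipow f n x0 < ipow f (n + 1) x0" using strict_monoD[OF c, of n "n + 1"] by simp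
      ultimately show "x \<in> chain_union (\<lambda>n. ipow f n x0)"
        by (intro chain_unionI[OF c, of m _ "n + 1"]) auto
    qed
  qed
qed

lemma nontriv_orbital_moves_up:
  assumes f: "aut f" and C: "C \<in> nontriv_orbitals f" and x0: "x0 \<in> C" "x0 < f x0" and x: "x \<in> C"
  shows "x < f x"
proof -
  note c = orbit_chain[OF assms(1-4)]
  define n where "n = chain_index (\<lambda>n. ipow f n x0) x"
  have n: "ipow f n x0 \<le> x" "x < ipow f (n + 1) x0"
    using chain_index[OF c(1)] c(2) x unfolding n_def by auto
  have "ipow f (n + 1) x0 \<le> f x" using n(1) by (simp add: ipow_succ aut_le_iff f)
  with n(2) show ?thesis by simp
qed

lemma nontriv_orbital_direction:
  assumes f: "aut f" and C: "C \<in> nontriv_orbitals f" and "x \<in> C" "y \<in> C"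
  shows "x < f x \<longleftrightarrow> y < f y"
  using nontriv_orbital_moves_up[OF f C] assms(3,4) by blast

lemma orbital_conj_up:
  assumes f: "aut f" and C: "C \<in> nontriv_orbitals f" and C': "C' \<in> nontriv_orbitals f"
    and x0: "x0 \<in> C" "x0 < f x0" and y0: "y0 \<in> C'" "y0 < f y0"
  shows "\<exists>\<psi>. order_iso_betw \<psi> C C' \<and> (\<forall>x\<in>C. \<psi> (f x) = f (\<psi> x))"
proof -
  define c where "c = (\<lambda>n. ipow f n x0)"
  define d where "d = (\<lambda>n. ipow f n y0)"
  note c = orbit_chain[OF f C x0, folded c_def] and d = orbit_chain[OF f C' y0, folded d_def]
  define \<phi> where "\<phi> = (\<lambda>x. y0 + (x - x0) * ((f y0 - y0) / (f x0 - x0)))"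
  have \<phi>: "order_iso_betw \<phi> {x0..<f x0} {y0..<f y0}"
    unfolding \<phi>_def by (rule order_iso_betw_affine) (use x0 y0 in auto)
  text \<open>An order isomorphism between the fundamental domains \<open>[x0, f x0)\<close> and \<open>[y0, f y0)\<close>
    extends \<open>f\<close>-equivariantly, link by link.\<close>
  define \<Phi> where "\<Phi> n = ipow f n \<circ> \<phi> \<circ> ipow f (- n)" for n
  have c_back: "ipow f (- n) (c n) = x0" "ipow f (- n) (c (n + 1)) = f x0" for n
    unfolding c_def using ipow_neg_cancel[OF f] ipow_add[OF f, of "- n" "n + 1" x0]
    by (simp_all add: ipow_1 f)
  have d_forth: "ipow f n y0 = d n" "ipow f n (f y0) = d (n + 1)" for n
    unfolding d_def using ipow_add[OF f, of n 1 y0] by (simp_all add: ipow_1 f)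
  have "order_iso_betw (\<Phi> n) {c n..<c (n + 1)} {d n..<d (n + 1)}" for n
  proof -
    have "order_iso_betw (ipow f (- n)) {c n..<c (n + 1)} {x0..<f x0}"
      using order_iso_betw_ipow[OF f, of "- n" "c n" "c (n + 1)"] by (simp add: c_back)
    moreover have "order_iso_betw (ipow f n) {y0..<f y0} {d n..<d (n + 1)}"
      using order_iso_betw_ipow[OF f, of n y0 "f y0"] by (simp add: d_forth)
    ultimately show ?thesis
      unfolding \<Phi>_def comp_assoc using \<phi> by (intro order_iso_betw_comp)
  qed
  then have iso: "order_iso_betw (\<lambda>x. \<Phi> (chain_index c x) x) C C'"
    using chain_glue[OF c(1) d(1)] c(2) d(2) by metis
  have "\<Phi> (chain_index c (f x)) (f x) = f (\<Phi> (chain_index c x) x)" if x: "x \<in> C" for x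
  proof -
    define n where "n = chain_index c x"
    have n: "c n \<le> x" "x < c (n + 1)" using chain_index[OF c(1)] c(2) x unfolding n_def by auto
    have c_succ: "c (m + 1) = f (c m)" for m unfolding c_def by (rule ipow_succ[OF f])
    have "c (n + 1) \<le> f x" using n(1) c_succ[of n] by (simp add: aut_le_iff f)
    moreover have "f x < c (n + 1 + 1)" using n(2) by (simp only: c_succ[of "n + 1"] aut_less_iff[OF f])
    ultimately
    have "chain_index c (f x) = n + 1" by (rule chain_index_eq[OF c(1)])
    moreover have "ipow f (- (n + 1)) (f x) = ipow f (- n) x"
      using ipow_add[OF f, of "- (n + 1)" 1 x] by (simp add: ipow_1 f)
    ultimately show ?thesis by (simp add: \<Phi>_def n_def ipow_succ f)
  qed
  with iso show ?thesis by blast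
qed

lemma orbital_conj:
  assumes f: "aut f" and C: "C \<in> nontriv_orbitals f" and C': "C' \<in> nontriv_orbitals f"
    and dir: "(\<forall>x\<in>C. x < f x) \<longleftrightarrow> (\<forall>x\<in>C'. x < f x)"
  shows "\<exists>\<psi>. order_iso_betw \<psi> C C' \<and> (\<forall>x\<in>C. \<psi> (f x) = f (\<psi> x))"
proof -
  obtain x0 y0 where x0: "x0 \<in> C" and y0: "y0 \<in> C'"
    using C C' nontriv_orbital_nonempty by metis
  show ?thesis
  proof (cases "x0 < f x0")
    case True
    then have "\<forall>x\<in>C. x < f x" using nontriv_orbital_direction[OF f C x0] by blast
    then have "y0 < f y0" using dir y0 by blast
    with True show ?thesis using orbital_conj_up[OF f C C' x0 _ y0] by blast
  next
    case False
    have down: "f z < z" if "z \<in> D" "D \<in> nontriv_orbitals f" "\<not> z < f z" for z D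
      using that nontriv_orbital_subset_supp[OF f that(2)] by (auto simp: supp_def)
    have "\<not> (\<forall>x\<in>C'. x < f x)" using False x0 dir by blast
    then have "\<not> y0 < f y0" using nontriv_orbital_direction[OF f C' y0] by blast
    then have up: "x0 < inv f x0" "y0 < inv f y0"
      using down[OF x0 C False] down[OF y0 C'] by (simp_all add: aut_less_inv_iff f)
    obtain \<psi> where \<psi>: "order_iso_betw \<psi> C C'" "\<forall>x\<in>C. \<psi> (inv f x) = inv f (\<psi> x)"
      using orbital_conj_up[OF aut_inv[OF f] _ _ x0 up(1) y0 up(2)] C C'
      by (auto simp: nontriv_orbitals_inv f)
    have "\<psi> (f x) = f (\<psi> x)" if "x \<in> C" for x
    proof -
      have "\<psi> x = inv f (\<psi> (f x))"
        using \<psi>(2) nontriv_orbital_apply_closed[OF f C that] by (metis aut_inv_apply f)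
      then show ?thesis by (simp add: aut_apply_inv f)
    qed
    with \<psi>(1) show ?thesis by blast
  qed
qed

definition has_rat_inf :: "rat set \<Rightarrow> bool" where
  "has_rat_inf C \<longleftrightarrow> (\<exists>m. (\<forall>y\<in>C. m < y) \<and> (\<forall>x. (\<forall>y\<in>C. x < y) \<longrightarrow> x \<le> m))"

definition has_rat_sup :: "rat set \<Rightarrow> bool" where
  "has_rat_sup C \<longleftrightarrow> (\<exists>m. (\<forall>y\<in>C. y < m) \<and> (\<forall>x. (\<forall>y\<in>C. y < x) \<longrightarrow> m \<le> x))"

definition orbital_type :: "(rat \<Rightarrow> rat) \<Rightarrow> rat set \<Rightarrow> bool \<times> bool \<times> bool" where
  "orbital_type f C = (has_rat_inf C, has_rat_sup C, \<forall>x\<in>C. x < f x)"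

definition well_inside :: "rat set \<Rightarrow> rat \<Rightarrow> rat \<Rightarrow> bool" where
  "well_inside C a b \<longleftrightarrow> (\<exists>y1 y2. a < y1 \<and> y2 < b \<and> (\<forall>z\<in>C. y1 < z \<and> z < y2))"

definition gap_below :: "rat \<Rightarrow> rat set \<Rightarrow> rat set" where
  "gap_below a C = {x. a \<le> x \<and> (\<forall>y\<in>C. x < y)}"

definition gap_above :: "rat set \<Rightarrow> rat \<Rightarrow> rat set" where
  "gap_above C b = {x. (\<forall>y\<in>C. y < x) \<and> x < b}"

lemma gap_below:
  assumes y: "a < y" "\<forall>z\<in>C. y < z"
  shows "order_convex (gap_below a C)" "a \<in> gap_below a C" "y \<in> gap_below a C"
    "\<exists>m\<in>gap_below a C. \<forall>x\<in>gap_below a C. m \<le> x"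
    "(\<exists>m\<in>gap_below a C. \<forall>x\<in>gap_below a C. x \<le> m) \<longleftrightarrow> has_rat_inf C"
proof -
  show "order_convex (gap_below a C)"
    unfolding order_convex_def gap_below_def by (auto intro: order_trans order_le_less_trans)
  show a: "a \<in> gap_below a C" and "y \<in> gap_below a C"
    using y by (auto simp: gap_below_def)
  then show "\<exists>m\<in>gap_below a C. \<forall>x\<in>gap_below a C. m \<le> x" by (auto simp: gap_below_def)
  show "(\<exists>m\<in>gap_below a C. \<forall>x\<in>gap_below a C. x \<le> m) \<longleftrightarrow> has_rat_inf C"
  proof
    assume "\<exists>m\<in>gap_below a C. \<forall>x\<in>gap_below a C. x \<le> m"
    then obtain m where m: "m \<in> gap_below a C" "\<forall>x\<in>gap_below a C. x \<le> m" by blast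
    have "x \<le> m" if "\<forall>y\<in>C. x < y" for x
      using that m a by (cases "a \<le> x") (auto simp: gap_below_def)
    with m(1) show "has_rat_inf C" unfolding has_rat_inf_def gap_below_def by blast
  next
    assume "has_rat_inf C"
    then obtain m where m: "\<forall>y\<in>C. m < y" "\<forall>x. (\<forall>y\<in>C. x < y) \<longrightarrow> x \<le> m"
      unfolding has_rat_inf_def by blast
    have "a \<le> m" using m(2) y by fastforce
    with m show "\<exists>m\<in>gap_below a C. \<forall>x\<in>gap_below a C. x \<le> m" by (auto simp: gap_below_def)
  qed
qed

lemma gap_above:
  assumes y: "y < b" "\<forall>z\<in>C. z < y"
  shows "order_convex (gap_above C b)" "y \<in> gap_above C b" "(y + b) / 2 \<in> gap_above C b"
    "y < (y + b) / 2"
    "\<not> (\<exists>m\<in>gap_above C b. \<forall>x\<in>gap_above C b. x \<le> m)"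
    "(\<exists>m\<in>gap_above C b. \<forall>x\<in>gap_above C b. m \<le> x) \<longleftrightarrow> has_rat_sup C"
proof -
  show "order_convex (gap_above C b)"
    unfolding order_convex_def gap_above_def by (auto intro: order_trans order_less_le_trans)
  have mid: "x < (x + b) / 2" "(x + b) / 2 < b" if "x < b" for x
    using that by (simp_all add: field_simps)
  show "y \<in> gap_above C b" using y by (simp add: gap_above_def)
  show "y < (y + b) / 2" using mid y by blast
  then show "(y + b) / 2 \<in> gap_above C b"
    using y mid[of y] by (auto simp: gap_above_def)
  show "\<not> (\<exists>m\<in>gap_above C b. \<forall>x\<in>gap_above C b. x \<le> m)"
  proof
    assume "\<exists>m\<in>gap_above C b. \<forall>x\<in>gap_above C b. x \<le> m"
    then obtain m where m: "m \<in> gap_above C b" "\<forall>x\<in>gap_above C b. x \<le> m" by blast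
    have "m < b" using m(1) by (simp add: gap_above_def)
    then have "(m + b) / 2 \<in> gap_above C b"
      using m(1) mid[of m] by (auto simp: gap_above_def intro: less_trans)
    then have "(m + b) / 2 \<le> m" using m(2) by blast
    then show False using mid[OF \<open>m < b\<close>] by linarith
  qed
  show "(\<exists>m\<in>gap_above C b. \<forall>x\<in>gap_above C b. m \<le> x) \<longleftrightarrow> has_rat_sup C"
  proof
    assume "\<exists>m\<in>gap_above C b. \<forall>x\<in>gap_above C b. m \<le> x"
    then obtain m where m: "m \<in> gap_above C b" "\<forall>x\<in>gap_above C b. m \<le> x" by blast
    have "m \<le> x" if "\<forall>y\<in>C. y < x" for x
      using that m by (cases "x < b") (auto simp: gap_above_def)
    with m(1) show "has_rat_sup C" unfolding has_rat_sup_def gap_above_def by blast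
  next
    assume "has_rat_sup C"
    then obtain m where m: "\<forall>y\<in>C. y < m" "\<forall>x. (\<forall>y\<in>C. y < x) \<longrightarrow> m \<le> x"
      unfolding has_rat_sup_def by blast
    have "m \<le> y" using m(2) y by fastforce
    then have "m \<in> gap_above C b" using m(1) y(1) by (simp add: gap_above_def)
    moreover have "\<forall>x\<in>gap_above C b. m \<le> x" using m(2) by (simp add: gap_above_def)
    ultimately show "\<exists>m\<in>gap_above C b. \<forall>x\<in>gap_above C b. m \<le> x" by blast
  qed
qed

lemma interval_split:
  assumes f: "aut f" and C: "C \<in> nontriv_orbitals f" and "well_inside C a b"
  shows "{a..<b} = (gap_below a C \<union> C) \<union> gap_above C b"
    "set_less (gap_below a C) C" "set_less (gap_below a C \<union> C) (gap_above C b)"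
proof -
  have ab: "\<forall>y\<in>C. a < y" "\<forall>y\<in>C. y < b"
    using \<open>well_inside C a b\<close> unfolding well_inside_def by force+
  obtain y0 where y0: "y0 \<in> C" using nontriv_orbital_nonempty[OF C] by blast
  show "set_less (gap_below a C) C" unfolding set_less_def gap_below_def by blast
  show "set_less (gap_below a C \<union> C) (gap_above C b)"
    unfolding set_less_def gap_below_def gap_above_def using y0 by fastforce
  have inC: "x \<in> C" if "x \<notin> gap_below a C" "x \<notin> gap_above C b" "a \<le> x" "x < b" for x
  proof -
    from that(1,3) obtain y where "y \<in> C" "y \<le> x" unfolding gap_below_def by (auto simp: not_less)
    moreover from that(2,4) obtain z where "z \<in> C" "x \<le> z"
      unfolding gap_above_def by (auto simp: not_less)
    ultimately show ?thesis using nontriv_orbital_convex[OF f C] by blast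
  qed
  have bounds: "a \<le> x \<and> x < b" if x: "x \<in> (gap_below a C \<union> C) \<union> gap_above C b" for x
  proof -
    have y0ab: "a < y0" "y0 < b" using ab y0 by blast+
    from x consider "x \<in> gap_below a C" | "x \<in> C" | "x \<in> gap_above C b" by blast
    then show ?thesis
    proof cases
      case 1
      then have "a \<le> x" "x < y0" using y0 by (simp_all add: gap_below_def)
      then show ?thesis using y0ab by simp
    next
      case 2
      then have "a < x" "x < b" using ab by blast+
      then show ?thesis by simp
    next
      case 3
      then have "y0 < x" "x < b" using y0 by (simp_all add: gap_above_def)
      then show ?thesis using y0ab by simp
    qed
  qed
  show "{a..<b} = (gap_below a C \<union> C) \<union> gap_above C b"
  proof (rule set_eqI)
    fix x
    show "x \<in> {a..<b} \<longleftrightarrow> x \<in> (gap_below a C \<union> C) \<union> gap_above C b"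
      using inC[of x] bounds[of x] by auto
  qed
qed

lemma gaps_order_iso:
  assumes "has_rat_inf C \<longleftrightarrow> has_rat_inf C'" "has_rat_sup C \<longleftrightarrow> has_rat_sup C'"
    and "well_inside C a b" "well_inside C' a' b'"
  shows "\<exists>\<phi>. order_iso_betw \<phi> (gap_below a C) (gap_below a' C')"
    "\<exists>\<phi>. order_iso_betw \<phi> (gap_above C b) (gap_above C' b')"
proof -
  obtain y1 y2 where y: "a < y1" "y2 < b" "\<forall>z\<in>C. y1 < z \<and> z < y2"
    using assms(3) unfolding well_inside_def by blast
  obtain y1' y2' where y': "a' < y1'" "y2' < b'" "\<forall>z\<in>C'. y1' < z \<and> z < y2'"
    using assms(4) unfolding well_inside_def by blast
  note L = gap_below[of a y1 C] and L' = gap_below[of a' y1' C']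
  note R = gap_above[of y2 b C] and R' = gap_above[of y2' b' C']
  show "\<exists>\<phi>. order_iso_betw \<phi> (gap_below a C) (gap_below a' C')"
    using order_convex_iso[OF L(1,2,3) _ L'(1,2,3)] L(4,5) L'(4,5) y y' assms(1) by simp
  show "\<exists>\<phi>. order_iso_betw \<phi> (gap_above C b) (gap_above C' b')"
    using order_convex_iso[OF R(1,2,3) R(4) R'(1,2,3) R'(4)] R(5,6) R'(5,6) y y' assms(2) by simp
qed

lemma interval_conj:
  assumes f: "aut f" and C: "C \<in> nontriv_orbitals f" and C': "C' \<in> nontriv_orbitals f"
    and type: "orbital_type f C = orbital_type f C'"
    and inside: "well_inside C a b" "well_inside C' a' b'"
    and g: "\<forall>x\<in>C. g x = f x" "\<forall>x\<in>{a..<b} - C. g x = x"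
    and g': "\<forall>x\<in>C'. g' x = f x" "\<forall>x\<in>{a'..<b'} - C'. g' x = x"
  shows "\<exists>\<psi>. order_iso_betw \<psi> {a..<b} {a'..<b'} \<and> (\<forall>x\<in>{a..<b}. \<psi> (g x) = g' (\<psi> x))"
proof -
  obtain \<phi>L where \<phi>L: "order_iso_betw \<phi>L (gap_below a C) (gap_below a' C')"
    using gaps_order_iso(1)[OF _ _ inside] type by (auto simp: orbital_type_def)
  obtain \<phi>R where \<phi>R: "order_iso_betw \<phi>R (gap_above C b) (gap_above C' b')"
    using gaps_order_iso(2)[OF _ _ inside] type by (auto simp: orbital_type_def)
  obtain \<phi>C where \<phi>C: "order_iso_betw \<phi>C C C'" "\<forall>x\<in>C. \<phi>C (f x) = f (\<phi>C x)"
    using orbital_conj[OF f C C'] type by (auto simp: orbital_type_def)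
  note S = interval_split[OF f C inside(1)] and S' = interval_split[OF f C' inside(2)]
  define \<psi> where "\<psi> x = (if x \<in> gap_below a C \<union> C
      then (if x \<in> gap_below a C then \<phi>L x else \<phi>C x) else \<phi>R x)" for x
  have iso: "order_iso_betw \<psi> {a..<b} {a'..<b'}"
    unfolding \<psi>_def S(1) S'(1)
    by (intro order_iso_betw_union \<phi>R S(2,3) S'(2,3) \<phi>L \<phi>C(1))
  have "\<psi> (g x) = g' (\<psi> x)" if x: "x \<in> {a..<b}" for x
  proof -
    consider "x \<in> gap_below a C" | "x \<in> C" | "x \<in> gap_above C b" using x S(1) by blast
    then show ?thesis
    proof cases
      case 1
      then have "x \<notin> C" "\<phi>L x \<in> gap_below a' C'" "\<phi>L x \<notin> C'"
        using order_iso_betw_mapsto[OF \<phi>L] S(2) S'(2) unfolding set_less_def by blast+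
      with 1 x S'(1) show ?thesis using g(2) g'(2) by (auto simp: \<psi>_def)
    next
      case 2
      then have "f x \<in> C" "x \<notin> gap_below a C" "f x \<notin> gap_below a C" "\<phi>C x \<in> C'"
        using nontriv_orbital_apply_closed[OF f C] order_iso_betw_mapsto[OF \<phi>C(1)] S(2)
        unfolding set_less_def by blast+
      with 2 show ?thesis using g(1) g'(1) \<phi>C(2) by (simp add: \<psi>_def)
    next
      case 3
      then have "x \<notin> gap_below a C \<union> C" "\<phi>R x \<in> gap_above C' b'" "\<phi>R x \<notin> C'"
        using order_iso_betw_mapsto[OF \<phi>R] S(3) S'(3) unfolding set_less_def by blast+
      with 3 x S'(1) show ?thesis using g(2) g'(2) by (auto simp: \<psi>_def)
    qed
  qed
  with iso show ?thesis by blast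
qed

section \<open>Gluing conjugators\<close>

lemma aut_if_order_iso_betw_UNIV: "order_iso_betw h UNIV UNIV \<Longrightarrow> aut h"
  unfolding order_iso_betw_def by (intro aut_if_strict_mono_surj) (auto simp: strict_mono_def monotone_on_def)

lemma chain_union_complement:
  assumes c: "strict_mono c" and below: "\<And>x. \<exists>n. c n \<le> x" and x: "x \<notin> chain_union c"
  shows "c n \<le> x"
proof (rule ccontr)
  assume "\<not> c n \<le> x"
  moreover obtain m where "c m \<le> x" using below by blast
  ultimately have "x \<in> chain_union c" by (intro chain_unionI[OF c, of m _ n]) auto
  with x show False by simp
qed

lemma glue_conjugators:
  fixes c :: "int \<Rightarrow> rat"
  assumes c: "strict_mono c" and below: "\<And>x. \<exists>n. c n \<le> x"
    and \<psi>: "\<And>n. order_iso_betw (\<psi> n) {c n..<c (n + 1)} {c (n + 1)..<c (n + 1 + 1)}"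
    and g_link: "\<And>n x. x \<in> {c n..<c (n + 1)} \<Longrightarrow> g x \<in> {c n..<c (n + 1)}"
    and comm: "\<And>n x. x \<in> {c n..<c (n + 1)} \<Longrightarrow> \<psi> n (g x) = g' (\<psi> n x)"
    and above: "\<And>x. \<forall>n. c n \<le> x \<Longrightarrow> g x = x \<and> g' x = x"
  shows "\<exists>h. aut h \<and> (\<forall>x. h (g x) = g' (h x))"
proof -
  define h where "h = (\<lambda>x. if x \<in> chain_union c then \<psi> (chain_index c x) x else x)"
  have shift: "strict_mono (\<lambda>n. c (n + 1))" using c by (simp add: strict_mono_def)
  have "chain_union (\<lambda>n. c (n + 1)) = chain_union c"
    unfolding chain_union_def by (metis add.commute diff_add_cancel)
  then have iso: "order_iso_betw (\<lambda>x. \<psi> (chain_index c x) x) (chain_union c) (chain_union c)"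
    using chain_glue[OF c shift \<psi>] by simp
  have id: "order_iso_betw (\<lambda>x. x) (- chain_union c) (- chain_union c)"
    by (simp add: order_iso_betw_def strict_mono_on_def monotone_on_def)
  have less: "set_less (chain_union c) (- chain_union c)"
    unfolding set_less_def
  proof (intro ballI)
    fix x y assume "x \<in> chain_union c" "y \<in> - chain_union c"
    then show "x < y"
      using chain_index[OF c] chain_union_complement[OF c below] by (meson ComplD order_less_le_trans)
  qed
  have "order_iso_betw h UNIV UNIV"
    using order_iso_betw_union[OF iso id less less] by (simp add: h_def Compl_partition)
  then have "aut h" by (rule aut_if_order_iso_betw_UNIV)
  moreover have "h (g x) = g' (h x)" for x
  proof (cases "x \<in> chain_union c")
    case False
    then show ?thesis using above chain_union_complement[OF c below] by (simp add: h_def)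
  next
    case True
    define n where "n = chain_index c x"
    have x: "x \<in> {c n..<c (n + 1)}" using chain_index[OF c True] by (simp add: n_def)
    then have "g x \<in> {c n..<c (n + 1)}" by (rule g_link)
    then have "chain_index c (g x) = n" "g x \<in> chain_union c"
      using chain_index_eq[OF c] unfolding chain_union_def by auto
    with True show ?thesis using comm[OF x] by (simp add: h_def n_def)
  qed
  ultimately show ?thesis by blast
qed

section \<open>An ascending sequence of orbitals of one type\<close>

locale ascending_orbitals =
  fixes f :: "rat \<Rightarrow> rat" and P :: "nat \<Rightarrow> rat set"
  assumes f: "aut f"
    and P: "\<And>n. P n \<in> nontriv_orbitals f"
    and ascending: "\<And>i j. i < j \<Longrightarrow> set_less (P i) (P j)"
    and same_type: "\<And>n. orbital_type f (P n) = orbital_type f (P 0)"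
begin

text \<open>Dropping every other orbital leaves room: the points \<open>sep k\<close> of the dropped ones cut
  the line into links \<open>[sep k, sep (k + 1))\<close>, the \<open>k\<close>-th containing \<open>orb k\<close> with a gap on
  either side.\<close>

definition orb :: "nat \<Rightarrow> rat set" where
  "orb k = P (2 * k + 1)"

definition sep :: "nat \<Rightarrow> rat" where
  "sep k = (SOME x. x \<in> P (2 * k))"

lemma orb_nontriv: "orb k \<in> nontriv_orbitals f"
  by (simp add: orb_def P)

lemma sep_in: "sep k \<in> P (2 * k)"
  unfolding sep_def using nontriv_orbital_nonempty[OF P] by (rule someI_ex)

lemma sep_less_orb: "y \<in> orb k \<Longrightarrow> sep k < y"
  using ascending[of "2 * k" "2 * k + 1"] sep_in[of k] unfolding set_less_def orb_def by simp

lemma orb_less_sep: "y \<in> orb k \<Longrightarrow> y < sep (Suc k)"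
  using ascending[of "2 * k + 1" "2 * Suc k"] sep_in[of "Suc k"] unfolding set_less_def orb_def by simp

lemma sep_strict_mono: "strict_mono sep"
  unfolding strict_mono_Suc_iff
proof
  fix k
  obtain y where "y \<in> orb k" using nontriv_orbital_nonempty[OF orb_nontriv] by blast
  then show "sep k < sep (Suc k)" using sep_less_orb orb_less_sep by (blast intro: less_trans)
qed

lemma orb_in_link:
  assumes "x \<in> orb j" "sep k \<le> x" "x < sep (Suc k)"
  shows "j = k"
proof -
  have "sep j < sep (Suc k)" using assms(1,3) sep_less_orb[of x j] by simp
  moreover have "sep k < sep (Suc j)" using assms(1,2) orb_less_sep[of x j] by simp
  ultimately show ?thesis using strict_mono_less[OF sep_strict_mono] by simp
qed

lemma orb_well_inside: "well_inside (orb k) (sep k) (sep (Suc k))"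
proof -
  obtain y1 where "y1 \<in> P (2 * k)" "sep k < y1"
    using nontriv_orbital_unbounded(1)[OF f P sep_in] by blast
  moreover obtain y2 where "y2 \<in> P (2 * Suc k)" "y2 < sep (Suc k)"
    using nontriv_orbital_unbounded(2)[OF f P sep_in] by blast
  moreover have "set_less (P (2 * k)) (orb k)" "set_less (orb k) (P (2 * Suc k))"
    unfolding orb_def by (simp_all add: ascending)
  ultimately show ?thesis unfolding well_inside_def set_less_def by blast
qed

definition keep :: "nat set \<Rightarrow> rat \<Rightarrow> rat" where
  "keep K = restr f (\<Union>(orb ` K))"

lemma keep_aut: "aut (keep K)"
  unfolding keep_def by (rule restr_aut[OF f]) (auto simp: orb_nontriv)

lemma keep_nontriv_orbitals: "nontriv_orbitals (keep K) = orb ` K"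
  unfolding keep_def by (rule restr_nontriv_orbitals[OF f]) (auto simp: orb_nontriv)

lemma keep_apply: "keep K x = (if \<exists>j\<in>K. x \<in> orb j then f x else x)"
  by (simp add: keep_def restr_def)

lemma keep_on_link:
  assumes "x \<in> {sep k..<sep (Suc k)}"
  shows "keep K x = (if k \<in> K \<and> x \<in> orb k then f x else x)"
  using assms orb_in_link by (auto simp: keep_apply)

lemma keep_link_closed:
  assumes x: "x \<in> {sep k..<sep (Suc k)}"
  shows "keep K x \<in> {sep k..<sep (Suc k)}"
proof (cases "k \<in> K \<and> x \<in> orb k")
  case True
  then have "f x \<in> orb k" using nontriv_orbital_apply_closed[OF f orb_nontriv] by blast
  then show ?thesis using True keep_on_link[OF x] sep_less_orb orb_less_sep by (simp add: less_imp_le)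
next
  case False
  then have "keep K x = x" using keep_on_link[OF x, of K] by auto
  with x show ?thesis by simp
qed

lemma orb_disjoint: "i \<noteq> j \<Longrightarrow> x \<in> orb i \<Longrightarrow> x \<notin> orb j"
  using orb_in_link[of x j i] sep_less_orb[of x i] orb_less_sep[of x i] by auto

lemma keep_union:
  assumes AB: "A \<inter> B = {}"
  shows "keep (A \<union> B) = keep A \<circ> keep B"
proof
  fix x
  have keep_f: "keep K x = f x" if "j \<in> K" "x \<in> orb j" for K j
    using that by (auto simp: keep_apply)
  have keep_id: "keep K y = y" if "\<And>i. i \<in> K \<Longrightarrow> y \<notin> orb i" for K y
    using that by (auto simp: keep_apply)
  consider j where "j \<in> A" "x \<in> orb j" | j where "j \<in> B" "x \<in> orb j"
    | "\<And>i. i \<in> A \<union> B \<Longrightarrow> x \<notin> orb i"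
    by blast
  then show "keep (A \<union> B) x = (keep A \<circ> keep B) x"
  proof cases
    case (1 j)
    have "keep B x = x"
    proof (rule keep_id)
      fix i assume "i \<in> B"
      then have "j \<noteq> i" using AB 1(1) by auto
      then show "x \<notin> orb i" using orb_disjoint 1(2) by blast
    qed
    with 1 show ?thesis using keep_f[of j A] keep_f[of j "A \<union> B"] by simp
  next
    case (2 j)
    have "f x \<in> orb j" using 2 nontriv_orbital_apply_closed[OF f orb_nontriv] by blast
    have "keep A (f x) = f x"
    proof (rule keep_id)
      fix i assume "i \<in> A"
      then have "j \<noteq> i" using AB 2(1) by auto
      then show "f x \<notin> orb i" using orb_disjoint \<open>f x \<in> orb j\<close> by blast
    qed
    with 2 show ?thesis using keep_f[of j B] keep_f[of j "A \<union> B"] by simp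
  next
    case 3
    then show ?thesis using keep_id[of "A \<union> B" x] keep_id[of A x] keep_id[of B x] by simp
  qed
qed

lemma keep_first_orbital: "orbital_elt_of (keep {0}) (keep UNIV)"
proof -
  have "keep {0} \<noteq> id"
    using keep_nontriv_orbitals[of "{0}"] nontriv_orbitals_eq[OF aut_id] by (auto simp: supp_def)
  then have "bump (keep {0})" using keep_aut keep_nontriv_orbitals by (simp add: bump_def)
  moreover have "x \<in> orb 0" if "x \<in> supp (keep {0})" for x
    using that by (auto simp: supp_def keep_def restr_def split: if_splits)
  ultimately show ?thesis
    unfolding orbital_elt_of_def supp_def by (auto simp: keep_def restr_def)
qed

lemma sep_less_orb_above: "x \<in> orb j \<Longrightarrow> i \<le> j \<Longrightarrow> sep i < x"
  using sep_less_orb[of x j] strict_mono_less_eq[OF sep_strict_mono, of i j] by simp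

definition mark :: "int \<Rightarrow> rat" where
  "mark n = (if 0 \<le> n then sep (nat n) else sep 0 + of_int n)"

lemma mark_nonneg:
  assumes "0 \<le> n"
  shows "mark n = sep (nat n)" "mark (n + 1) = sep (Suc (nat n))"
    "mark (n + 1 + 1) = sep (Suc (Suc (nat n)))"
proof -
  have "nat (n + 1) = Suc (nat n)" "nat (n + 1 + 1) = Suc (Suc (nat n))" using assms by simp_all
  with assms show "mark n = sep (nat n)" "mark (n + 1) = sep (Suc (nat n))"
    "mark (n + 1 + 1) = sep (Suc (Suc (nat n)))" by (simp_all add: mark_def)
qed

lemma mark_int: "mark (int k) = sep k"
  by (simp add: mark_def)

lemma mark_strict_mono: "strict_mono mark"
proof (rule strict_mono_int_succI)
  fix n
  show "mark n < mark (n + 1)"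
  proof (cases "0 \<le> n")
    case True
    then show ?thesis using strict_monoD[OF sep_strict_mono] by (simp add: mark_nonneg)
  next
    case False
    then show ?thesis by (cases "n = - 1") (simp_all add: mark_def)
  qed
qed

lemma mark_below: "\<exists>n. mark n \<le> x"
proof (cases "sep 0 \<le> x")
  case True
  then show ?thesis by (intro exI[of _ 0]) (simp add: mark_def)
next
  case False
  then have "\<lfloor>x - sep 0\<rfloor> < 0" by (simp add: floor_less_iff)
  then have "mark \<lfloor>x - sep 0\<rfloor> \<le> x"
    using of_int_floor_le[of "x - sep 0"] by (simp add: mark_def) linarith
  then show ?thesis ..
qed

lemma above_marks_not_in_orb:
  assumes "\<forall>n. mark n \<le> x"
  shows "x \<notin> orb j"
proof -
  have "sep (Suc j) \<le> x" using assms[rule_format, of "int (Suc j)"] by (simp only: mark_int)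
  then show ?thesis using orb_less_sep[of x j] by auto
qed

lemma link_conj:
  "\<exists>\<psi>. order_iso_betw \<psi> {mark n..<mark (n + 1)} {mark (n + 1)..<mark (n + 1 + 1)} \<and>
     (\<forall>x\<in>{mark n..<mark (n + 1)}. \<psi> (keep UNIV x) = keep {Suc 0..} (\<psi> x))"
proof (cases "0 \<le> n")
  case True
  define k where "k = nat n"
  have type: "orbital_type f (orb k) = orbital_type f (orb (Suc k))"
    using same_type[of "2 * k + 1"] same_type[of "2 * Suc k + 1"] by (simp add: orb_def)
  have "\<exists>\<psi>. order_iso_betw \<psi> {sep k..<sep (Suc k)} {sep (Suc k)..<sep (Suc (Suc k))} \<and>
     (\<forall>x\<in>{sep k..<sep (Suc k)}. \<psi> (keep UNIV x) = keep {Suc 0..} (\<psi> x))"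
  proof (rule interval_conj[OF f orb_nontriv orb_nontriv type orb_well_inside orb_well_inside])
    show "\<forall>x\<in>orb k. keep UNIV x = f x" "\<forall>x\<in>orb (Suc k). keep {Suc 0..} x = f x"
      by (auto simp: keep_apply)
    show "\<forall>x\<in>{sep k..<sep (Suc k)} - orb k. keep UNIV x = x"
      by (auto simp: keep_on_link)
    show "\<forall>x\<in>{sep (Suc k)..<sep (Suc (Suc k))} - orb (Suc k). keep {Suc 0..} x = x"
      by (auto simp: keep_on_link)
  qed
  then show ?thesis unfolding mark_nonneg[OF True] k_def .
next
  case False
  text \<open>Below \<open>sep 0\<close> and \<open>sep 1\<close> respectively, both maps are the identity, so any order
    isomorphism will do.\<close>
  have bounds: "mark (n + 1) \<le> sep 0" "mark (n + 1 + 1) \<le> sep (Suc 0)"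
    using False strict_mono_less_eq[OF mark_strict_mono, of _ 0] strict_mono_less_eq[OF mark_strict_mono, of _ 1]
    by (simp_all add: mark_def[of 0] mark_def[of 1])
  then have fixed: "keep UNIV x = x" if "x < mark (n + 1)" for x
    using sep_less_orb_above[of x _ 0] that by (auto simp: keep_apply)
  have fixed': "keep {Suc 0..} y = y" if "y < mark (n + 1 + 1)" for y
    using sep_less_orb_above[of y _ 1] that bounds(2) by (auto simp: keep_apply)
  define \<phi> where "\<phi> x = mark (n + 1) + (x - mark n) *
      ((mark (n + 1 + 1) - mark (n + 1)) / (mark (n + 1) - mark n))" for x
  have \<phi>: "order_iso_betw \<phi> {mark n..<mark (n + 1)} {mark (n + 1)..<mark (n + 1 + 1)}"
    unfolding \<phi>_def by (rule order_iso_betw_affine) (simp_all add: strict_monoD[OF mark_strict_mono])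
  have "\<phi> (keep UNIV x) = keep {Suc 0..} (\<phi> x)" if "x \<in> {mark n..<mark (n + 1)}" for x
    using that fixed fixed' order_iso_betw_mapsto[OF \<phi> that] by simp
  with \<phi> show ?thesis by blast
qed

lemma keep_conj: "\<exists>h. aut h \<and> keep {Suc 0..} = h \<circ> keep UNIV \<circ> inv h"
proof -
  obtain \<Psi> where \<Psi>: "\<And>n. order_iso_betw (\<Psi> n) {mark n..<mark (n + 1)} {mark (n + 1)..<mark (n + 1 + 1)}"
    "\<And>n x. x \<in> {mark n..<mark (n + 1)} \<Longrightarrow> \<Psi> n (keep UNIV x) = keep {Suc 0..} (\<Psi> n x)"
  proof -
    from choice[OF allI[OF link_conj]] obtain \<Psi> where
      "\<forall>n. order_iso_betw (\<Psi> n) {mark n..<mark (n + 1)} {mark (n + 1)..<mark (n + 1 + 1)} \<and>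
        (\<forall>x\<in>{mark n..<mark (n + 1)}. \<Psi> n (keep UNIV x) = keep {Suc 0..} (\<Psi> n x))" ..
    then show ?thesis using that by blast
  qed
  have link: "keep UNIV x \<in> {mark n..<mark (n + 1)}" if "x \<in> {mark n..<mark (n + 1)}" for n x
  proof (cases "0 \<le> n")
    case True
    then show ?thesis using that keep_link_closed[of x "nat n" UNIV]
      unfolding mark_nonneg(1,2)[OF True] by blast
  next
    case False
    then have "x < sep 0" using that strict_mono_less_eq[OF mark_strict_mono, of "n + 1" 0]
      by (simp add: mark_def[of 0])
    then have "keep UNIV x = x" using sep_less_orb_above[of x _ 0] by (auto simp: keep_apply)
    with that show ?thesis by simp
  qed
  have "\<forall>n. mark n \<le> x \<Longrightarrow> keep UNIV x = x \<and> keep {Suc 0..} x = x" for x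
    using above_marks_not_in_orb by (auto simp: keep_apply)
  then obtain h where h: "aut h" "\<And>x. h (keep UNIV x) = keep {Suc 0..} (h x)"
    using glue_conjugators[OF mark_strict_mono mark_below \<Psi>(1) link \<Psi>(2)] by blast
  have "keep {Suc 0..} y = (h \<circ> keep UNIV \<circ> inv h) y" for y
    using h(2)[of "inv h y"] by (simp add: aut_apply_inv h(1))
  with h(1) show ?thesis by blast
qed

lemma satisfies_inf: "satisfies_inf f"
proof -
  have "keep UNIV = keep {0} \<circ> keep {Suc 0..}"
    using keep_union[of "{0}" "{Suc 0..}"] by (simp add: atLeast_Suc)
  then show ?thesis
    unfolding satisfies_inf_def keep_def[of UNIV]
    using keep_aut keep_first_orbital keep_conj restr_restriction by (metis keep_def)
qed

end

lemma satisfies_inf_if_ascending: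
  fixes Q :: "nat \<Rightarrow> rat set"
  assumes f: "aut f" and Q: "\<And>n. Q n \<in> nontriv_orbitals f"
    and ascending: "\<And>i j. i < j \<Longrightarrow> set_less (Q i) (Q j)"
  shows "satisfies_inf f"
proof -
  have "\<exists>n0\<in>UNIV. infinite {n\<in>UNIV. orbital_type f (Q n) = orbital_type f (Q n0)}"
    by (rule pigeonhole_infinite) simp_all
  then obtain n0 where "infinite {n. orbital_type f (Q n) = orbital_type f (Q n0)}" by auto
  then obtain r :: "nat \<Rightarrow> nat" where r: "strict_mono r"
    and type: "\<And>n. orbital_type f (Q (r n)) = orbital_type f (Q n0)"
    using strict_mono_enumerate enumerate_in_set by blast
  interpret ascending_orbitals f "Q \<circ> r"
    using f Q type by unfold_locales (simp_all add: ascending strict_monoD[OF r])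
  show ?thesis by (rule satisfies_inf)
qed

section \<open>Reflection\<close>

definition mirror :: "(rat \<Rightarrow> rat) \<Rightarrow> rat \<Rightarrow> rat" where
  "mirror f x = - f (- x)"

lemma mirror_mirror [simp]: "mirror (mirror f) = f"
  by (simp add: mirror_def fun_eq_iff)

lemma mirror_comp: "mirror (f \<circ> g) = mirror f \<circ> mirror g"
  by (simp add: mirror_def fun_eq_iff)

lemma aut_mirror:
  assumes "aut f"
  shows "aut (mirror f)"
proof (rule aut_if_strict_mono_surj)
  show "strict_mono (mirror f)" by (rule strict_monoI) (simp add: mirror_def aut_less_iff assms)
  show "surj (mirror f)"
    by (rule surjI[of _ "mirror (inv f)"]) (simp add: mirror_def aut_apply_inv assms)
qed

lemma inv_mirror:
  assumes "aut f"
  shows "inv (mirror f) = mirror (inv f)"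
proof
  fix y
  have "mirror f (mirror (inv f) y) = y" by (simp add: mirror_def aut_apply_inv assms)
  then show "inv (mirror f) y = mirror (inv f) y"
    using aut_inv_apply[OF aut_mirror[OF assms], of "mirror (inv f) y"] by simp
qed

lemma mem_uminus_image: "(x :: rat) \<in> uminus ` A \<longleftrightarrow> - x \<in> A"
proof
  assume "x \<in> uminus ` A"
  then show "- x \<in> A" by auto
next
  assume "- x \<in> A"
  then have "- (- x) \<in> uminus ` A" by (rule imageI)
  then show "x \<in> uminus ` A" by simp
qed

lemma supp_mirror: "supp (mirror f) = uminus ` supp f"
  by (rule set_eqI) (auto simp: supp_def mirror_def mem_uminus_image)

lemma nontriv_orbitals_mirror:
  assumes "aut f"
  shows "nontriv_orbitals (mirror f) = image uminus ` nontriv_orbitals f"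
proof (rule nontriv_orbitals_intertwine[where \<sigma> = uminus, OF assms aut_mirror[OF assms]])
  show "mirror f (- x) = - f x" for x by (simp add: mirror_def)
  show "surj (uminus :: rat \<Rightarrow> rat)" by (rule surjI[of _ uminus]) simp
  show "(\<forall>u v. - u \<le> - v \<longleftrightarrow> u \<le> v) \<or> (\<forall>u v :: rat. - u \<le> - v \<longleftrightarrow> v \<le> u)" by simp
qed

lemma bump_mirror:
  assumes "bump g"
  shows "bump (mirror g)"
proof -
  have g: "aut g" and "g \<noteq> id" using assms by (simp_all add: bump_def)
  then have "mirror g \<noteq> id" by (metis mirror_mirror mirror_def id_apply minus_minus fun_eq_iff)
  obtain C where "nontriv_orbitals g = {C}" using assms unfolding bump_def by blast
  then have "nontriv_orbitals (mirror g) = {uminus ` C}" by (simp add: nontriv_orbitals_mirror g)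
  with \<open>mirror g \<noteq> id\<close> show ?thesis by (simp add: bump_def aut_mirror g)
qed

lemma satisfies_inf_mirror:
  assumes "satisfies_inf f"
  shows "satisfies_inf (mirror f)"
proof -
  obtain g g1 g2 h where g: "aut g" and g1: "aut g1" and g2: "aut g2"
    and r: "restriction_of g f" and o: "orbital_elt_of g1 g" and fac: "g = g1 \<circ> g2"
    and h: "aut h" and conj: "g2 = h \<circ> g \<circ> inv h"
    using assms unfolding satisfies_inf_def by blast
  have "restriction_of (mirror g) (mirror f)"
    using r unfolding restriction_of_def supp_mirror by (auto simp: mirror_def)
  moreover have "orbital_elt_of (mirror g1) (mirror g)"
    using o bump_mirror unfolding orbital_elt_of_def supp_mirror by (auto simp: mirror_def)
  moreover have "mirror g2 = mirror h \<circ> mirror g \<circ> inv (mirror h)"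
    by (simp add: conj mirror_comp inv_mirror h)
  ultimately show ?thesis unfolding satisfies_inf_def
    using aut_mirror g g1 g2 h fac mirror_comp by metis
qed

lemma satisfies_inf_if_descending:
  fixes Q :: "nat \<Rightarrow> rat set"
  assumes f: "aut f" and Q: "\<And>n. Q n \<in> nontriv_orbitals f"
    and descending: "\<And>i j. i < j \<Longrightarrow> set_less (Q j) (Q i)"
  shows "satisfies_inf f"
proof -
  have "satisfies_inf (mirror f)"
  proof (rule satisfies_inf_if_ascending[OF aut_mirror[OF f]])
    show "uminus ` Q n \<in> nontriv_orbitals (mirror f)" for n
      using Q by (simp add: nontriv_orbitals_mirror f)
    show "set_less (uminus ` Q i) (uminus ` Q j)" if "i < j" for i j
      using descending[OF that] by (auto simp: set_less_def)
  qed
  then show ?thesis using satisfies_inf_mirror by fastforce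
qed

section \<open>Infinitely many orbitals\<close>

text \<open>Ramsey's theorem, colouring a pair by the order of its two orbitals.\<close>
lemma monotone_orbital_sequence:
  assumes f: "aut f" and "infinite (nontriv_orbitals f)"
  obtains Q :: "nat \<Rightarrow> rat set" where "\<And>n. Q n \<in> nontriv_orbitals f"
    "(\<forall>i j. i < j \<longrightarrow> set_less (Q i) (Q j)) \<or> (\<forall>i j. i < j \<longrightarrow> set_less (Q j) (Q i))"
proof -
  obtain e :: "nat \<Rightarrow> rat set" where e: "inj e" "range e \<subseteq> nontriv_orbitals f"
    using infinite_countable_subset[OF assms(2)] by blast
  define colour :: "nat set \<Rightarrow> nat" where
    "colour S = (if set_less (e (Min S)) (e (Max S)) then 0 else 1)" for S
  have "\<forall>x\<in>UNIV. \<forall>y\<in>UNIV. x \<noteq> y \<longrightarrow> colour {x, y} < 2" by (simp add: colour_def)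
  from Ramsey2[OF infinite_UNIV_nat this] obtain Y t where Y: "infinite Y" "t < 2"
    and homog: "\<forall>x\<in>Y. \<forall>y\<in>Y. x \<noteq> y \<longrightarrow> colour {x, y} = t"
    by blast
  define Q where "Q n = e (enumerate Y n)" for n
  have Q: "Q n \<in> nontriv_orbitals f" for n using e(2) by (auto simp: Q_def)
  have colour_O: "colour {enumerate Y i, enumerate Y j} = t" if "i < j" for i j
    using homog enumerate_in_set[OF Y(1)] enumerate_mono[OF that Y(1)] by (metis less_irrefl)
  have min_max: "Min {enumerate Y i, enumerate Y j} = enumerate Y i"
    "Max {enumerate Y i, enumerate Y j} = enumerate Y j" if "i < j" for i j
    using enumerate_mono[OF that Y(1)] by auto
  show ?thesis
  proof (cases "t = 0")
    case True
    have "set_less (Q i) (Q j)" if "i < j" for i j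
      using colour_O[OF that] min_max[OF that] True by (simp add: colour_def Q_def split: if_splits)
    then show ?thesis using Q that by blast
  next
    case False
    have "set_less (Q j) (Q i)" if "i < j" for i j
    proof -
      have "\<not> set_less (Q i) (Q j)"
        using colour_O[OF that] min_max[OF that] False by (simp add: colour_def Q_def split: if_splits)
      moreover have "Q i \<noteq> Q j"
        using enumerate_mono[OF that Y(1)] e(1) by (auto simp: Q_def inj_eq)
      ultimately show ?thesis using nontriv_orbitals_linear[OF f Q Q] by blast
    qed
    then show ?thesis using Q that by blast
  qed
qed

theorem lemma2p2:
  fixes f :: "rat \<Rightarrow> rat"
  assumes "aut f"
  shows "(\<exists>g g1 g2. aut g \<and> aut g1 \<and> aut g2 \<and>
            restriction_of g f \<and> orbital_elt_of g1 g \<and> g = g1 \<circ> g2 \<and>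
            (\<exists>h. aut h \<and> g2 = h \<circ> g \<circ> inv h))
         \<longleftrightarrow> infinite (nontriv_orbitals f)"
proof -
  have "satisfies_inf f \<longleftrightarrow> infinite (nontriv_orbitals f)"
  proof
    assume "infinite (nontriv_orbitals f)"
    then show "satisfies_inf f"
    proof (rule monotone_orbital_sequence[OF assms])
      fix Q :: "nat \<Rightarrow> rat set" assume Q: "\<And>n. Q n \<in> nontriv_orbitals f"
        and "(\<forall>i j. i < j \<longrightarrow> set_less (Q i) (Q j)) \<or> (\<forall>i j. i < j \<longrightarrow> set_less (Q j) (Q i))"
      then show "satisfies_inf f"
        using satisfies_inf_if_ascending[where Q = Q, OF assms Q]
          satisfies_inf_if_descending[where Q = Q, OF assms Q] by blast
    qed
  qed (rule satisfies_inf_infinite[OF assms])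
  then show ?thesis unfolding satisfies_inf_def .
qed

end
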